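(* Let $G$ be a connected graph with $m$ edges and $m_1$ pendent $2$-length paths. Then $rc(L^2(G))\leq m-m_1$, and equality holds if and only if $G$ is a path of length at least $3$.
   Context: All graphs are simple, finite and undirected. $L(G)$ is the line graph of $G$ and $L^2(G)=L(L(G))$ is the iterated line graph. A pendent $k$-length path of $G$ is a path of length $k$ in $G$ one of whose end vertices has degree $1$ in $G$ and all of whose internal vertices have degree $2$ in $G$. For an edge-colouring of a graph (adjacent edges may receive the same colour), a path is rainbow if no two of its edges have the same colour; the graph is rainbow connected if every two vertices are joined by a rainbow path. The rainbow connection number $rc(H)$ of a connected graph $H$ is the smallest number of colours in an edge-colouring making $H$ rainbow connected. *)

theory Defs
  imports Main
begin

type_synonym 'a graph = "'a set \<times> 'a set set"

definition simple_graph :: "'a graph \<Rightarrow> bool" where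
  "simple_graph G \<longleftrightarrow> finite (fst G) \<and>
     (\<forall>e\<in>snd G. \<exists>u v. e = {u, v} \<and> u \<noteq> v \<and> u \<in> fst G \<and> v \<in> fst G)"

definition is_gpath :: "'a graph \<Rightarrow> 'a list \<Rightarrow> bool" where
  "is_gpath G xs \<longleftrightarrow> xs \<noteq> [] \<and> set xs \<subseteq> fst G \<and> distinct xs \<and>
     (\<forall>i. Suc i < length xs \<longrightarrow> {xs ! i, xs ! Suc i} \<in> snd G)"

definition path_edges :: "'a list \<Rightarrow> 'a set list" where
  "path_edges xs = map (\<lambda>i. {xs ! i, xs ! Suc i}) [0..<length xs - 1]"

definition connected_graph :: "'a graph \<Rightarrow> bool" where
  "connected_graph G \<longleftrightarrow> fst G \<noteq> {} \<and>
     (\<forall>u\<in>fst G. \<forall>v\<in>fst G. \<exists>xs. is_gpath G xs \<and> hd xs = u \<and> last xs = v)"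

definition degree :: "'a graph \<Rightarrow> 'a \<Rightarrow> nat" where
  "degree G v = card {e \<in> snd G. v \<in> e}"

definition line_graph :: "'a graph \<Rightarrow> 'a set graph" where
  "line_graph G = (snd G, {{e, f} | e f. e \<in> snd G \<and> f \<in> snd G \<and> e \<noteq> f \<and> e \<inter> f \<noteq> {}})"

definition rainbow_path :: "('a set \<Rightarrow> nat) \<Rightarrow> 'a list \<Rightarrow> bool" where
  "rainbow_path c xs \<longleftrightarrow> distinct (map c (path_edges xs))"

definition rainbow_connected :: "'a graph \<Rightarrow> ('a set \<Rightarrow> nat) \<Rightarrow> bool" where
  "rainbow_connected G c \<longleftrightarrow>
     (\<forall>u\<in>fst G. \<forall>v\<in>fst G. \<exists>xs. is_gpath G xs \<and> hd xs = u \<and> last xs = v \<and> rainbow_path c xs)"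

definition rc :: "'a graph \<Rightarrow> nat" where
  "rc G = (LEAST k. \<exists>c. (\<forall>e\<in>snd G. c e < k) \<and> rainbow_connected G c)"

text \<open>Pendent 2-length paths, counted as subgraphs (i.e. by their edge sets).\<close>
definition pendent_2paths :: "'a graph \<Rightarrow> 'a set set set" where
  "pendent_2paths G = {set (path_edges xs) | xs. is_gpath G xs \<and> length xs = 3 \<and>
       degree G (xs ! 0) = 1 \<and> degree G (xs ! 1) = 2}"

definition is_path_graph_len_ge3 :: "'a graph \<Rightarrow> bool" where
  "is_path_graph_len_ge3 G \<longleftrightarrow> (\<exists>xs. is_gpath G xs \<and> set xs = fst G \<and>
       set (path_edges xs) = snd G \<and> length xs \<ge> 4)"

end

theory Submission
  imports Defs
begin

text \<open>
  A vertex of L(L(G)) is a pair of adjacent edges of G, and an edge of L(L(G)) is a walk a, f, b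
  of three edges of G with a \<noteq> b; its middle edge f has two distinct neighbours. Colouring
  every edge of L(L(G)) by its middle edge rainbow-connects L(L(G)): between two pairs, a shortest
  walk of edges has pairwise distinct middle edges. The pendant edge of a pendent 2-path is never a
  middle edge, hence rc(L(L(G))) is at most the number of middle edges, which is at most m - m1.

  Unless G is a path with at least three edges, one colour can be saved: a vertex of degree three
  gives a triangle of L(G) whose middle colour can be borrowed from another edge of the triangle;
  in a cycle, removing one edge keeps the other edges connected, so that edge can take the colour
  of a neighbour; paths with at most two edges are checked directly. For a path with m \<ge> 3
  edges, m1 = 2 and the two extreme vertices of L(L(G)) lie at distance m - 2 = m - m1, so that
  equality holds.
\<close>

lemma path_edges_Nil [simp]: "path_edges [] = []"
  by (simp add: path_edges_def)

lemma path_edges_singleton [simp]: "path_edges [x] = []"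
  by (simp add: path_edges_def)

lemma path_edges_Cons_Cons [simp]: "path_edges (x # y # zs) = {x, y} # path_edges (y # zs)"
  unfolding path_edges_def by (simp add: upt_conv_Cons map_Suc_upt[symmetric] del: upt_Suc)

lemma length_path_edges [simp]: "length (path_edges xs) = length xs - 1"
  by (simp add: path_edges_def)

lemma nth_path_edges: "i < length xs - 1 \<Longrightarrow> path_edges xs ! i = {xs ! i, xs ! Suc i}"
  by (simp add: path_edges_def)

lemma edge_in_set_path_edges: "Suc i < length xs \<Longrightarrow> {xs ! i, xs ! Suc i} \<in> set (path_edges xs)"
  using nth_mem[of i "path_edges xs"] by (simp add: nth_path_edges)

lemma successively_path_edges_meet: "successively (\<lambda>e f. e \<inter> f \<noteq> {}) (path_edges xs)"
proof (induction xs rule: induct_list012)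
  case (3 x y zs)
  then show ?case by (cases zs) auto
qed auto

lemma set_path_edges_subset: "successively (\<lambda>u v. {u, v} \<in> E) xs \<Longrightarrow> set (path_edges xs) \<subseteq> E"
  by (induction xs rule: induct_list012) auto

lemma hd_last_path_edges:
  assumes "2 \<le> length xs"
  shows "hd (path_edges xs) = {xs ! 0, xs ! 1}"
    and "last (path_edges xs) = {xs ! (length xs - 2), xs ! (length xs - 1)}"
proof -
  have ne: "path_edges xs \<noteq> []"
    using assms by (metis One_nat_def diff_is_0_eq length_path_edges list.size(3) not_less_eq_eq Suc_1)
  show "hd (path_edges xs) = {xs ! 0, xs ! 1}"
    using ne assms by (simp add: hd_conv_nth nth_path_edges)
  have "Suc (length xs - 2) = length xs - 1"
    using assms by arith
  then show "last (path_edges xs) = {xs ! (length xs - 2), xs ! (length xs - 1)}"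
    using ne assms by (simp add: last_conv_nth nth_path_edges numeral_2_eq_2)
qed

lemma path_edges_rev: "path_edges (rev xs) = rev (path_edges xs)"
  by (rule nth_equalityI) (auto simp: nth_path_edges rev_nth Suc_diff_Suc insert_commute)

lemma distinct_path_edges:
  assumes "distinct xs"
  shows "distinct (path_edges xs)"
  unfolding distinct_conv_nth
proof (intro allI impI)
  fix i j
  assume "i < length (path_edges xs)" "j < length (path_edges xs)" "i \<noteq> j"
  then show "path_edges xs ! i \<noteq> path_edges xs ! j"
    using assms by (auto simp: nth_path_edges doubleton_eq_iff nth_eq_iff_index_eq)
qed

lemma vertex_in_nth_path_edges_iff:
  assumes "distinct xs" "i < length xs - 1" "j < length xs"
  shows "xs ! j \<in> path_edges xs ! i \<longleftrightarrow> i = j \<or> Suc i = j"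
  using assms by (auto simp: nth_path_edges nth_eq_iff_index_eq)

lemma path_edges_meet_imp_consecutive:
  assumes "distinct xs" "i < j" "j < length xs - 1" "path_edges xs ! i \<inter> path_edges xs ! j \<noteq> {}"
  shows "j = Suc i"
  using assms by (auto simp: nth_path_edges nth_eq_iff_index_eq)

definition path_angle :: "'b list \<Rightarrow> nat \<Rightarrow> 'b set set" where
  "path_angle xs i = {path_edges xs ! i, path_edges xs ! Suc i}"

lemma path_angle_inj:
  assumes "distinct xs" "Suc i < length xs - 1" "Suc j < length xs - 1" "path_angle xs i = path_angle xs j"
  shows "i = j"
proof -
  have "distinct (path_edges xs)"
    using assms(1) by (rule distinct_path_edges)
  then show ?thesis
    using assms(2-4) by (auto simp: path_angle_def doubleton_eq_iff nth_eq_iff_index_eq)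
qed

lemma path_angles_meet:
  assumes "distinct xs" "Suc i < length xs - 1" "Suc j < length xs - 1"
    and "path_angle xs i \<inter> path_angle xs j \<noteq> {}"
  shows "j \<le> Suc i"
proof (rule ccontr)
  assume "\<not> j \<le> Suc i"
  moreover have "distinct (path_edges xs)"
    using assms(1) by (rule distinct_path_edges)
  ultimately have "path_edges xs ! a \<noteq> path_edges xs ! b" if "a \<in> {i, Suc i}" "b \<in> {j, Suc j}" for a b
    using that assms(2,3) by (auto simp: nth_eq_iff_index_eq)
  then show False
    using assms(4) by (auto simp: path_angle_def)
qed

lemma successively_take: "successively P xs \<Longrightarrow> successively P (take n xs)"
  by (metis append_take_drop_id successively_append_iff)

lemma successively_drop: "successively P xs \<Longrightarrow> successively P (drop n xs)"
  by (metis append_take_drop_id successively_append_iff)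

lemma last_take_Suc: "i < length xs \<Longrightarrow> last (take (Suc i) xs) = xs ! i"
  by (simp add: take_Suc_conv_app_nth)

lemma is_gpath_iff_successively:
  "is_gpath G xs \<longleftrightarrow> xs \<noteq> [] \<and> set xs \<subseteq> fst G \<and> distinct xs \<and> successively (\<lambda>u v. {u, v} \<in> snd G) xs"
  by (simp add: is_gpath_def successively_conv_nth)

lemma is_gpath_edge: "is_gpath G xs \<Longrightarrow> Suc i < length xs \<Longrightarrow> {xs ! i, xs ! Suc i} \<in> snd G"
  by (simp add: is_gpath_def)

lemma is_gpath_slice:
  assumes "is_gpath G xs" "i \<le> j" "j < length xs"
  shows "is_gpath G (drop i (take (Suc j) xs))"
    and "hd (drop i (take (Suc j) xs)) = xs ! i" "last (drop i (take (Suc j) xs)) = xs ! j"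
  using assms by (auto simp: is_gpath_iff_successively successively_drop successively_take
      hd_drop_conv_nth last_take_Suc dest: in_set_dropD in_set_takeD)

lemma is_gpath_rev: "is_gpath G xs \<Longrightarrow> is_gpath G (rev xs)"
  by (auto simp: is_gpath_iff_successively successively_rev insert_commute elim: successively_mono)

definition longest_gpath :: "'a graph \<Rightarrow> 'a list \<Rightarrow> bool" where
  "longest_gpath G xs \<longleftrightarrow> is_gpath G xs \<and> (\<forall>ys. is_gpath G ys \<longrightarrow> length ys \<le> length xs)"

lemma longest_gpath_rev: "longest_gpath G xs \<Longrightarrow> longest_gpath G (rev xs)"
  by (simp add: longest_gpath_def is_gpath_rev)

lemma connected_graph_edge_closed:
  assumes conn: "connected_graph (V, E)" and u: "u \<in> S" "u \<in> V"
    and closed: "\<And>e. e \<in> E \<Longrightarrow> e \<inter> S \<noteq> {} \<Longrightarrow> e \<subseteq> S"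
  shows "V \<subseteq> S"
proof
  fix v
  assume "v \<in> V"
  with conn u(2) have "\<exists>ys. is_gpath (V, E) ys \<and> hd ys = u \<and> last ys = v"
    by (simp add: connected_graph_def)
  then obtain ys where ys: "is_gpath (V, E) ys" "hd ys = u" "last ys = v"
    by blast
  then have ne: "ys \<noteq> []"
    by (simp add: is_gpath_def)
  have "ys ! k \<in> S" if "k < length ys" for k
    using that
  proof (induction k)
    case 0
    then show ?case
      using ys(2) ne u by (simp add: hd_conv_nth)
  next
    case (Suc k)
    have "{ys ! k, ys ! Suc k} \<in> E"
      using is_gpath_edge[OF ys(1) Suc.prems] by simp
    moreover have "ys ! k \<in> S"
      using Suc by simp
    ultimately have "{ys ! k, ys ! Suc k} \<subseteq> S"
      using closed by blast
    then show ?case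
      by simp
  qed
  from this[of "length ys - 1"] show "v \<in> S"
    using ys(3) ne by (simp add: last_conv_nth)
qed

lemma rc_le: "\<forall>e\<in>snd H. c e < k \<Longrightarrow> rainbow_connected H c \<Longrightarrow> rc H \<le> k"
  unfolding rc_def by (rule Least_le) blast

lemma rc_attained:
  assumes "\<forall>e\<in>snd H. c e < k" "rainbow_connected H c"
  obtains c' where "\<forall>e\<in>snd H. c' e < rc H" "rainbow_connected H c'"
proof -
  have "\<exists>k c. (\<forall>e\<in>snd H. c e < k) \<and> rainbow_connected H c"
    using assms by blast
  from LeastI_ex[OF this] show ?thesis
    using that unfolding rc_def by blast
qed

lemma rainbow_path_length_le:
  assumes "\<forall>e\<in>snd H. c e < k" "is_gpath H ys" "rainbow_path c ys"
  shows "length ys - 1 \<le> k"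
proof -
  have "path_edges ys ! i \<in> snd H" if "i < length ys - 1" for i
    using that assms(2) by (simp add: is_gpath_def nth_path_edges)
  then have "set (map c (path_edges ys)) \<subseteq> {0..<k}"
    using assms(1) by (auto simp: in_set_conv_nth)
  then have "card (set (map c (path_edges ys))) \<le> k"
    using card_mono[of "{0..<k}"] by fastforce
  moreover have "card (set (map c (path_edges ys))) = length ys - 1"
    using assms(3) distinct_card by (fastforce simp: rainbow_path_def)
  ultimately show ?thesis
    by simp
qed

lemma rc_ge_if_far:
  assumes "\<forall>e\<in>snd H. c e < k" "rainbow_connected H c" "u \<in> fst H" "v \<in> fst H"
    and far: "\<And>ys. is_gpath H ys \<Longrightarrow> hd ys = u \<Longrightarrow> last ys = v \<Longrightarrow> d < length ys"
  shows "d \<le> rc H"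
proof -
  obtain c' where c': "\<forall>e\<in>snd H. c' e < rc H" "rainbow_connected H c'"
    using rc_attained[OF assms(1,2)] .
  then obtain ys where ys: "is_gpath H ys" "hd ys = u" "last ys = v" "rainbow_path c' ys"
    using assms(3,4) unfolding rainbow_connected_def by blast
  show ?thesis
    using rainbow_path_length_le[OF c'(1) ys(1,4)] far[OF ys(1-3)] by linarith
qed

section \<open>Walks of edges\<close>

definition edge_walk :: "'b set set \<Rightarrow> 'b set set \<Rightarrow> 'b set set \<Rightarrow> 'b set list \<Rightarrow> bool" where
  "edge_walk W X Y ws \<longleftrightarrow>
     ws \<noteq> [] \<and> set ws \<subseteq> W \<and> successively (\<lambda>e f. e \<inter> f \<noteq> {}) ws \<and> hd ws \<in> X \<and> last ws \<in> Y"

definition shortest_edge_walk :: "'b set set \<Rightarrow> 'b set set \<Rightarrow> 'b set set \<Rightarrow> 'b set list \<Rightarrow> bool" where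
  "shortest_edge_walk W X Y gs \<longleftrightarrow>
     edge_walk W X Y gs \<and> (\<forall>ws. edge_walk W X Y ws \<longrightarrow> length gs \<le> length ws)"

lemma shortest_edge_walk_exists:
  assumes "edge_walk W X Y ws"
  obtains gs where "shortest_edge_walk W X Y gs"
  using ex_has_least_nat[of "edge_walk W X Y" ws length] assms
  unfolding shortest_edge_walk_def by blast

lemma edge_walk_skip_repetition:
  assumes w: "edge_walk W X Y gs" and ij: "i < j" "j < length gs" and eq: "gs ! i = gs ! j"
  shows "edge_walk W X Y (take (Suc i) gs @ drop (Suc j) gs)"
proof -
  let ?l = "take (Suc i) gs @ drop (Suc j) gs"
  have s: "successively (\<lambda>e f. e \<inter> f \<noteq> {}) gs" and ne: "gs \<noteq> []"
    using w by (auto simp: edge_walk_def)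
  have "successively (\<lambda>e f. e \<inter> f \<noteq> {}) ?l"
  proof (cases "Suc j < length gs")
    case True
    with s ij eq show ?thesis
      using successively_nth[OF s True]
      by (auto simp: successively_append_iff successively_take successively_drop last_take_Suc
          hd_drop_conv_nth)
  qed (use successively_take[OF s] in simp)
  moreover have "last ?l \<in> Y"
  proof (cases "Suc j < length gs")
    case False
    then have "j = length gs - 1"
      using ij by simp
    then have "last gs = gs ! i"
      using eq ne by (simp add: last_conv_nth)
    with w False ij show ?thesis
      by (auto simp: edge_walk_def last_take_Suc)
  qed (use w in \<open>auto simp: edge_walk_def\<close>)
  ultimately show ?thesis
    using w ij by (auto simp: edge_walk_def dest: in_set_takeD in_set_dropD)
qed

lemma edge_walk_skip_chord:
  assumes w: "edge_walk W X Y gs" and ij: "Suc i < j" "j < length gs" and meet: "gs ! i \<inter> gs ! j \<noteq> {}"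
  shows "edge_walk W X Y (take (Suc i) gs @ drop j gs)"
proof -
  have "successively (\<lambda>e f. e \<inter> f \<noteq> {}) gs"
    using w by (auto simp: edge_walk_def)
  then show ?thesis
    using w ij meet by (auto simp: edge_walk_def successively_append_iff successively_take
        successively_drop last_take_Suc hd_drop_conv_nth dest: in_set_takeD in_set_dropD)
qed

lemma shortest_edge_walkD:
  assumes "shortest_edge_walk W X Y gs"
  shows "edge_walk W X Y gs"
    and "distinct gs"
    and "\<And>i. 0 < i \<Longrightarrow> i < length gs \<Longrightarrow> gs ! i \<notin> X"
    and "\<And>i. Suc i < length gs \<Longrightarrow> gs ! i \<notin> Y"
    and "\<And>i j. Suc i < j \<Longrightarrow> j < length gs \<Longrightarrow> gs ! i \<inter> gs ! j = {}"
proof -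
  show w: "edge_walk W X Y gs"
    using assms by (simp add: shortest_edge_walk_def)
  have shorter: "\<not> edge_walk W X Y ws" if "length ws < length gs" for ws
    using assms that by (auto simp: shortest_edge_walk_def)
  show "distinct gs"
  proof (rule ccontr)
    assume "\<not> distinct gs"
    then obtain i j where "i < j" "j < length gs" "gs ! i = gs ! j"
      by (metis distinct_conv_nth linorder_neqE_nat)
    with edge_walk_skip_repetition[OF w this] shorter show False
      by force
  qed
  show "gs ! i \<notin> X" if "0 < i" "i < length gs" for i
    using shorter[of "drop i gs"] w that
    by (auto simp: edge_walk_def successively_drop hd_drop_conv_nth dest: in_set_dropD)
  show "gs ! i \<notin> Y" if "Suc i < length gs" for i
    using shorter[of "take (Suc i) gs"] w that
    by (auto simp: edge_walk_def successively_take last_take_Suc dest: in_set_takeD)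
  show "gs ! i \<inter> gs ! j = {}" if "Suc i < j" "j < length gs" for i j
    using edge_walk_skip_chord[OF w that] shorter that by force
qed

lemma shortest_edge_walk_replace_hd:
  assumes gs: "shortest_edge_walk W X Y gs" and "2 \<le> length gs"
    and x: "x \<in> X" "x \<in> W" "x \<inter> gs ! 1 \<noteq> {}"
  shows "shortest_edge_walk W X Y (x # tl gs)"
proof -
  obtain g0 g1 r where "gs = g0 # g1 # r"
    using \<open>2 \<le> length gs\<close> by (metis Suc_le_length_iff numeral_2_eq_2)
  with gs x show ?thesis
    by (auto simp: shortest_edge_walk_def edge_walk_def)
qed

lemma shortest_edge_walk_replace_last:
  assumes gs: "shortest_edge_walk W X Y gs" and "2 \<le> length gs"
    and x: "x \<in> Y" "x \<in> W" "gs ! (length gs - 2) \<inter> x \<noteq> {}"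
  shows "shortest_edge_walk W X Y (butlast gs @ [x])"
proof -
  obtain ys y where ys: "gs = ys @ [y]" "ys \<noteq> []"
    using \<open>2 \<le> length gs\<close> by (cases gs rule: rev_exhaust) force+
  then have "gs ! (length gs - 2) = last ys"
    by (simp add: nth_append last_conv_nth numeral_2_eq_2)
  with gs x ys show ?thesis
    by (auto simp: shortest_edge_walk_def edge_walk_def successively_append_iff)
qed

lemma edge_walk_within_path:
  assumes "x \<in> set (path_edges xs)" "y \<in> set (path_edges xs)"
  shows "\<exists>ws. edge_walk (set (path_edges xs)) {x} {y} ws"
proof -
  let ?p = "path_edges xs"
  have segment: "edge_walk (set ?p) {?p ! i} {?p ! j} (drop i (take (Suc j) ?p))"
    if "i \<le> j" "j < length ?p" for i j
    using that successively_drop[OF successively_take[OF successively_path_edges_meet]]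
    by (auto simp: edge_walk_def hd_drop_conv_nth last_take_Suc dest: in_set_dropD in_set_takeD)
  have rev: "edge_walk W B A (rev ws)" if "edge_walk W A B ws" for W A B ws
    using that by (auto simp: edge_walk_def hd_rev last_rev successively_rev Int_commute
        elim: successively_mono)
  obtain i j where ij: "i < length ?p" "?p ! i = x" "j < length ?p" "?p ! j = y"
    using assms by (auto simp: in_set_conv_nth)
  show ?thesis
  proof (cases "i \<le> j")
    case True
    with segment[of i j] ij show ?thesis by blast
  next
    case False
    with segment[of j i] ij have "edge_walk (set ?p) {y} {x} (drop j (take (Suc i) ?p))"
      by simp
    then show ?thesis
      using rev by blast
  qed
qed

text \<open>A list fs of edges of G traces the path path_edges fs of L(G), that is, a path of L(L(G))
  whose i-th edge is {{fs!i, fs!(i+1)}, {fs!(i+1), fs!(i+2)}}. Such an edge is determined by its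
  span, the union {fs!i, fs!(i+1), fs!(i+2)}, and by its middle edge fs!(i+1), the unique element
  of the intersection; colourings of L(L(G)) are described as functions of these two.\<close>

definition route_colours :: "('b set \<Rightarrow> 'b \<Rightarrow> 'c) \<Rightarrow> 'b list \<Rightarrow> 'c list" where
  "route_colours col fs = map (\<lambda>i. col {fs ! i, fs ! Suc i, fs ! Suc (Suc i)} (fs ! Suc i)) [0..<length fs - 2]"

definition span_colouring :: "('b set \<Rightarrow> 'b \<Rightarrow> nat) \<Rightarrow> 'b set set \<Rightarrow> nat" where
  "span_colouring col \<epsilon> = col (\<Union>\<epsilon>) (the_elem (\<Inter>\<epsilon>))"

lemma route_colours_comp: "route_colours (\<lambda>X f. h (col X f)) fs = map h (route_colours col fs)"
  by (simp add: route_colours_def)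

lemma route_colours_middle: "route_colours (\<lambda>X f. f) (a # gs @ [b]) = gs"
  by (rule nth_equalityI) (auto simp: route_colours_def nth_append)

lemma nth_extended_walk:
  assumes "t < length gs"
  shows "(a # gs @ [b]) ! t = (if t = 0 then a else gs ! (t - 1))"
    and "(a # gs @ [b]) ! Suc t = gs ! t"
    and "(a # gs @ [b]) ! Suc (Suc t) = (if Suc t < length gs then gs ! Suc t else b)"
proof -
  show "(a # gs @ [b]) ! t = (if t = 0 then a else gs ! (t - 1))"
    using assms by (cases t) (simp_all add: nth_append)
  show "(a # gs @ [b]) ! Suc t = gs ! t"
    using assms by (simp add: nth_append)
  have "Suc t = length gs" if "\<not> Suc t < length gs"
    using assms that by simp
  then show "(a # gs @ [b]) ! Suc (Suc t) = (if Suc t < length gs then gs ! Suc t else b)"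
    by (auto simp: nth_append)
qed

text \<open>Frees the label of e3 when e1, e2, e3 form a triangle of L(G).\<close>

definition triangle_label :: "'b \<Rightarrow> 'b \<Rightarrow> 'b \<Rightarrow> 'b set \<Rightarrow> 'b \<Rightarrow> 'b" where
  "triangle_label e1 e2 e3 X f = (if f = e3 then if e1 \<in> X then e2 else e1 else f)"

text \<open>The extended walk a # gs @ [b] starts with e1, e3, e2 or ends with e2, e3, e1. Along a
  shortest walk this is the only way the label borrowed by e3 can occur twice.\<close>

definition triangle_turn :: "'b \<Rightarrow> 'b \<Rightarrow> 'b \<Rightarrow> 'b \<Rightarrow> 'b list \<Rightarrow> 'b \<Rightarrow> bool" where
  "triangle_turn e1 e2 e3 a gs b \<longleftrightarrow> 2 \<le> length gs \<and>
     (a = e1 \<and> gs ! 0 = e3 \<and> gs ! 1 = e2 \<or> b = e1 \<and> gs ! (length gs - 1) = e3 \<and> gs ! (length gs - 2) = e2)"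

lemma triangle_turn_middle_in_walk:
  assumes "triangle_turn e1 e2 e3 a gs b"
  shows "e3 \<in> set gs"
proof -
  have "0 < length gs" "length gs - 1 < length gs"
    using assms by (auto simp: triangle_turn_def)
  then show ?thesis
    using assms nth_mem[of 0 gs] nth_mem[of "length gs - 1" gs] by (auto simp: triangle_turn_def)
qed

section \<open>The iterated line graph\<close>

locale simple_graph_setting =
  fixes V :: "'a set" and E :: "'a set set"
  assumes simple: "simple_graph (V, E)"
begin

lemma edgeE:
  assumes "e \<in> E"
  obtains u v where "e = {u, v}" "u \<noteq> v" "u \<in> V" "v \<in> V"
  using simple assms unfolding simple_graph_def by auto

lemma finite_V: "finite V"
  using simple by (simp add: simple_graph_def)

lemma finite_E: "finite E"
  using finite_subset[of E "Pow V"] finite_V by (auto elim!: edgeE)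

definition adjacent_edges :: "'a set \<Rightarrow> 'a set \<Rightarrow> bool" where
  "adjacent_edges e f \<longleftrightarrow> e \<in> E \<and> f \<in> E \<and> e \<noteq> f \<and> e \<inter> f \<noteq> {}"

lemma adjacent_edges_sym: "adjacent_edges e f \<Longrightarrow> adjacent_edges f e"
  by (auto simp: adjacent_edges_def)

definition line_edges :: "'a set set set" where
  "line_edges = {{e, f} | e f. adjacent_edges e f}"

definition line2_edges :: "'a set set set set" where
  "line2_edges = {{\<alpha>, \<beta>} | \<alpha> \<beta>. \<alpha> \<in> line_edges \<and> \<beta> \<in> line_edges \<and> \<alpha> \<noteq> \<beta> \<and> \<alpha> \<inter> \<beta> \<noteq> {}}"

text \<open>Exactly the edges of G that occur as the middle edge of an edge of L(L(G)).\<close>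

definition middle_edges :: "'a set set" where
  "middle_edges = {f \<in> E. \<exists>a b. a \<noteq> b \<and> adjacent_edges a f \<and> adjacent_edges b f}"

lemma line_graph_line_graph: "line_graph (line_graph (V, E)) = (line_edges, line2_edges)"
  by (simp add: line_graph_def line_edges_def line2_edges_def adjacent_edges_def)

lemma middle_edges_subset: "middle_edges \<subseteq> E"
  by (auto simp: middle_edges_def)

lemma finite_middle_edges: "finite middle_edges"
  using finite_subset[OF middle_edges_subset finite_E] .

lemma middle_edgesI: "adjacent_edges a f \<Longrightarrow> adjacent_edges f b \<Longrightarrow> a \<noteq> b \<Longrightarrow> f \<in> middle_edges"
  unfolding middle_edges_def by (blast intro: adjacent_edges_sym dest: adjacent_edges_def[THEN iffD1])

lemma line_edge_partner:
  assumes "\<alpha> \<in> line_edges" "f \<in> \<alpha>"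
  obtains a where "\<alpha> = {a, f}" "adjacent_edges a f"
  using assms by (auto simp: line_edges_def insert_commute intro: adjacent_edges_sym)

lemma line_edge_meets:
  assumes "\<alpha> \<in> line_edges" "e \<in> E"
  obtains f where "f \<in> \<alpha>" "f \<in> E" "f \<noteq> e"
  using assms by (auto simp: line_edges_def adjacent_edges_def)

lemma line2_edgeE:
  assumes "\<epsilon> \<in> line2_edges"
  obtains a f b where "\<epsilon> = {{a, f}, {f, b}}" "adjacent_edges a f" "adjacent_edges f b" "a \<noteq> b"
proof -
  obtain \<alpha> \<beta> f where \<epsilon>: "\<epsilon> = {\<alpha>, \<beta>}" "\<alpha> \<in> line_edges" "\<beta> \<in> line_edges" "\<alpha> \<noteq> \<beta>"
    and f: "f \<in> \<alpha>" "f \<in> \<beta>"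
    using assms by (auto simp: line2_edges_def)
  obtain a b where "\<alpha> = {a, f}" "adjacent_edges a f" "\<beta> = {b, f}" "adjacent_edges b f"
    using line_edge_partner[OF \<epsilon>(2) f(1)] line_edge_partner[OF \<epsilon>(3) f(2)] by metis
  with \<epsilon> that[of a f b] show ?thesis
    by (auto simp: insert_commute intro: adjacent_edges_sym)
qed

lemma span_colouring_step:
  assumes "adjacent_edges a f" "adjacent_edges f b" "a \<noteq> b"
  shows "span_colouring col {{a, f}, {f, b}} = col {a, f, b} f"
proof -
  have "\<Inter>{{a, f}, {f, b}} = {f}" "\<Union>{{a, f}, {f, b}} = {a, f, b}"
    using assms by (auto simp: adjacent_edges_def)
  then show ?thesis
    by (simp only: span_colouring_def the_elem_eq)
qed

lemma span_colouring_line2_edge: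
  assumes "\<epsilon> \<in> line2_edges"
  obtains X f where "f \<in> middle_edges" "span_colouring col \<epsilon> = col X f"
  using assms by (metis line2_edgeE middle_edgesI span_colouring_step)

lemma rc_le_span_colouring:
  assumes "rainbow_connected (line_edges, line2_edges) (span_colouring col)"
    and "\<And>X f. f \<in> middle_edges \<Longrightarrow> col X f < k"
  shows "rc (line_edges, line2_edges) \<le> k"
proof (rule rc_le)
  show "\<forall>\<epsilon>\<in>snd (line_edges, line2_edges). span_colouring col \<epsilon> < k"
    using assms(2) by (metis snd_conv span_colouring_line2_edge)
qed (use assms(1) in simp)

text \<open>A sequence of edges of G whose consecutive pairs form a path of L(L(G)); its first and
  last edge may coincide once it has at least four edges.\<close>

definition angle_chain :: "'a set list \<Rightarrow> bool" where
  "angle_chain fs \<longleftrightarrow> 3 \<le> length fs \<and> set fs \<subseteq> E \<and> successively (\<lambda>e f. e \<inter> f \<noteq> {}) fs \<and>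
     distinct (tl fs) \<and> distinct (butlast fs) \<and> (length fs = 3 \<longrightarrow> fs ! 0 \<noteq> fs ! 2)"

lemma angle_chain_nth_neq:
  assumes c: "angle_chain fs" and ij: "i < j" "j < length fs"
    and "i \<noteq> 0 \<or> j \<noteq> length fs - 1 \<or> length fs = 3"
  shows "fs ! i \<noteq> fs ! j"
proof -
  consider "i \<noteq> 0" | "j \<noteq> length fs - 1" | "i = 0" "j = 2" "length fs = 3"
    using assms(4) ij by linarith
  then show ?thesis
  proof cases
    case 1
    then have "tl fs ! (i - 1) \<noteq> tl fs ! (j - 1)"
      using c ij by (simp add: angle_chain_def nth_eq_iff_index_eq)
    with 1 ij show ?thesis
      by (simp add: nth_tl)
  next
    case 2
    then have "butlast fs ! i \<noteq> butlast fs ! j"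
      using c ij by (simp add: angle_chain_def nth_eq_iff_index_eq)
    with 2 ij show ?thesis
      by (simp add: nth_butlast)
  qed (use c in \<open>simp add: angle_chain_def\<close>)
qed

lemma angle_chain_adjacent:
  assumes "angle_chain fs" "Suc i < length fs"
  shows "adjacent_edges (fs ! i) (fs ! Suc i)"
proof -
  have "fs ! i \<noteq> fs ! Suc i"
    using assms by (intro angle_chain_nth_neq) (auto simp: angle_chain_def)
  moreover have "fs ! i \<inter> fs ! Suc i \<noteq> {}"
    using assms successively_nth[of "\<lambda>e f. e \<inter> f \<noteq> {}" fs i] by (simp add: angle_chain_def)
  ultimately show ?thesis
    using assms nth_mem[of i fs] nth_mem[of "Suc i" fs] by (auto simp: angle_chain_def adjacent_edges_def)
qed

lemma angle_chain_neq2: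
  assumes "angle_chain fs" "Suc (Suc i) < length fs"
  shows "fs ! i \<noteq> fs ! Suc (Suc i)"
  using assms by (intro angle_chain_nth_neq) auto

lemma angle_chain_middle_edge:
  assumes "angle_chain fs" "Suc (Suc i) < length fs"
  shows "fs ! Suc i \<in> middle_edges"
  using assms angle_chain_adjacent angle_chain_neq2 middle_edgesI by (metis Suc_lessD)

lemma angle_chain_path_edges_in_line_edges:
  assumes "angle_chain fs" "i < length fs - 1"
  shows "path_edges fs ! i \<in> line_edges"
proof -
  have "adjacent_edges (fs ! i) (fs ! Suc i)"
    using assms by (intro angle_chain_adjacent) auto
  then show ?thesis
    using assms(2) unfolding line_edges_def by (auto simp: nth_path_edges)
qed

lemma angle_chain_distinct_angles:
  assumes c: "angle_chain fs"
  shows "distinct (path_edges fs)"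
proof -
  have "path_edges fs ! i \<noteq> path_edges fs ! j" if ij: "i < j" "j < length fs - 1" for i j
  proof -
    have "fs ! i \<noteq> fs ! j"
      using ij by (intro angle_chain_nth_neq[OF c]) auto
    moreover have "fs ! Suc i \<noteq> fs ! j" if "Suc i < j"
      using ij that by (intro angle_chain_nth_neq[OF c]) auto
    moreover have "fs ! i \<noteq> fs ! Suc j" if "j = Suc i"
      using ij that angle_chain_neq2[OF c, of i] by simp
    moreover have "Suc i < j \<or> j = Suc i"
      using ij by linarith
    ultimately show ?thesis
      using ij by (auto simp: nth_path_edges doubleton_eq_iff)
  qed
  then show ?thesis
    unfolding distinct_conv_nth by (metis length_path_edges linorder_neqE_nat)
qed

lemma angle_chain_is_gpath:
  assumes c: "angle_chain fs"
  shows "is_gpath (line_edges, line2_edges) (path_edges fs)"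
proof -
  have "{path_edges fs ! i, path_edges fs ! Suc i} \<in> line2_edges" if "Suc i < length fs - 1" for i
  proof -
    have "path_edges fs ! i \<noteq> path_edges fs ! Suc i"
      using angle_chain_distinct_angles[OF c] that by (simp add: nth_eq_iff_index_eq)
    moreover have "fs ! Suc i \<in> path_edges fs ! i \<inter> path_edges fs ! Suc i"
      using that by (simp add: nth_path_edges)
    ultimately show ?thesis
      using that angle_chain_path_edges_in_line_edges[OF c, of i] angle_chain_path_edges_in_line_edges[OF c, of "Suc i"]
      unfolding line2_edges_def by force
  qed
  moreover have "path_edges fs \<noteq> []"
    using c by (simp add: angle_chain_def flip: length_greater_0_conv)
  ultimately show ?thesis
    using angle_chain_path_edges_in_line_edges[OF c] angle_chain_distinct_angles[OF c]
    by (auto simp: is_gpath_def in_set_conv_nth)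
qed

lemma angle_chain_colours:
  assumes "angle_chain fs"
  shows "map (span_colouring col) (path_edges (path_edges fs)) = route_colours col fs"
proof (rule nth_equalityI)
  fix i
  assume "i < length (map (span_colouring col) (path_edges (path_edges fs)))"
  then have i: "Suc (Suc i) < length fs" "i < length fs - 2"
    by simp_all
  then have "path_edges (path_edges fs) ! i = {{fs ! i, fs ! Suc i}, {fs ! Suc i, fs ! Suc (Suc i)}}"
    by (simp add: nth_path_edges)
  with i show "map (span_colouring col) (path_edges (path_edges fs)) ! i = route_colours col fs ! i"
    using span_colouring_step angle_chain_adjacent[OF assms] angle_chain_neq2[OF assms i(1)]
    by (simp add: route_colours_def)
qed (simp add: route_colours_def)

lemma rainbow_connected_if_chains:
  assumes "\<And>A B. A \<in> line_edges \<Longrightarrow> B \<in> line_edges \<Longrightarrow> A \<noteq> B \<Longrightarrow> \<exists>fs. angle_chain fs \<and>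
      hd (path_edges fs) = A \<and> last (path_edges fs) = B \<and> distinct (route_colours col fs)"
  shows "rainbow_connected (line_edges, line2_edges) (span_colouring col)"
  unfolding rainbow_connected_def
proof (intro ballI)
  fix A B
  assume AB: "A \<in> fst (line_edges, line2_edges)" "B \<in> fst (line_edges, line2_edges)"
  show "\<exists>xs. is_gpath (line_edges, line2_edges) xs \<and> hd xs = A \<and> last xs = B \<and>
      rainbow_path (span_colouring col) xs"
  proof (cases "A = B")
    case True
    with AB show ?thesis
      by (intro exI[of _ "[A]"]) (simp add: is_gpath_def rainbow_path_def)
  next
    case False
    with assms AB obtain fs where "angle_chain fs" "hd (path_edges fs) = A" "last (path_edges fs) = B"
        "distinct (route_colours col fs)"
      by auto
    then show ?thesis
      by (intro exI[of _ "path_edges fs"])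
        (simp add: angle_chain_is_gpath rainbow_path_def angle_chain_colours)
  qed
qed

lemma angle_chain_of_shortest_edge_walk:
  assumes A: "A \<in> line_edges" and B: "B \<in> line_edges" "A \<noteq> B" and W: "W \<subseteq> E"
    and gs: "shortest_edge_walk W A B gs"
  obtains a b where "A = {a, hd gs}" "B = {last gs, b}" "angle_chain (a # gs @ [b])"
proof -
  note walk = shortest_edge_walkD[OF gs]
  have ne: "gs \<noteq> []" and W_gs: "set gs \<subseteq> W" and hd_A: "hd gs \<in> A" and last_B: "last gs \<in> B"
    and meet: "successively (\<lambda>e f. e \<inter> f \<noteq> {}) gs"
    using walk(1) by (auto simp: edge_walk_def)
  obtain a where a: "A = {a, hd gs}" "adjacent_edges a (hd gs)"
    using line_edge_partner[OF A hd_A] .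
  obtain b where b: "B = {last gs, b}" "adjacent_edges (last gs) b"
    using line_edge_partner[OF B(1) last_B] by (metis adjacent_edges_sym insert_commute)
  have "a \<notin> set gs"
  proof
    assume "a \<in> set gs"
    then obtain i where i: "i < length gs" "gs ! i = a"
      by (auto simp: in_set_conv_nth)
    with walk(3)[of i] a ne show False
      by (cases "i = 0") (auto simp: adjacent_edges_def hd_conv_nth)
  qed
  moreover have "b \<notin> set gs"
  proof
    assume "b \<in> set gs"
    then obtain i where i: "i < length gs" "gs ! i = b"
      by (auto simp: in_set_conv_nth)
    show False
    proof (cases "Suc i < length gs")
      case False
      then have "i = length gs - 1"
        using i by simp
      then have "gs ! i = last gs"
        using ne by (simp add: last_conv_nth)
      with i b show False
        by (simp add: adjacent_edges_def)
    qed (use walk(4) i b in auto)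
  qed
  moreover have "a \<noteq> b" if "length gs = 1"
    using that ne a b B(2) by (cases gs) (auto simp: insert_commute)
  moreover have "successively (\<lambda>e f. e \<inter> f \<noteq> {}) (a # gs @ [b])"
    using meet a(2) b(2) ne by (auto simp: successively_append_iff successively_Cons adjacent_edges_def)
  moreover have "set (a # gs @ [b]) \<subseteq> E"
    using a(2) b(2) W_gs W by (auto simp: adjacent_edges_def)
  ultimately have "angle_chain (a # gs @ [b])"
    using walk(2) ne by (auto simp: angle_chain_def butlast_append nth_append Suc_le_eq)
  with a b that show ?thesis
    by blast
qed

lemma hd_last_angles_of_route:
  assumes "gs \<noteq> []"
  shows "hd (path_edges (a # gs @ [b])) = {a, hd gs}"
    and "last (path_edges (a # gs @ [b])) = {last gs, b}"
  using assms hd_last_path_edges[of "a # gs @ [b]"]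
  by (auto simp: nth_append hd_conv_nth last_conv_nth)

lemma edge_walk_in_connected_graph:
  assumes conn: "connected_graph (V, E)" and "x \<in> E" "y \<in> E"
  shows "\<exists>ws. edge_walk E {x} {y} ws"
proof -
  obtain u w where u: "u \<in> x" "u \<in> V" and w: "w \<in> y" "w \<in> V"
    using assms(2,3) by (metis edgeE insertI1)
  with conn obtain vs where vs: "is_gpath (V, E) vs" "hd vs = u" "last vs = w"
    unfolding connected_graph_def by auto
  have ne: "vs \<noteq> []" and sv: "successively (\<lambda>a b. {a, b} \<in> E) vs"
    using vs(1) by (auto simp: is_gpath_iff_successively)
  let ?ws = "x # path_edges vs @ [y]"
  have "successively (\<lambda>e f. e \<inter> f \<noteq> {}) ?ws"
  proof (cases "2 \<le> length vs")
    case True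
    then have "u \<in> hd (path_edges vs)" "w \<in> last (path_edges vs)" "path_edges vs \<noteq> []"
      using vs hd_last_path_edges[OF True] ne
      by (auto simp: hd_conv_nth last_conv_nth simp flip: length_greater_0_conv)
    then show ?thesis
      using successively_path_edges_meet[of vs] u w
      by (auto simp: successively_append_iff successively_Cons)
  next
    case False
    then obtain v where "vs = [v]"
      using ne by (cases vs) (auto simp: Suc_le_eq)
    then show ?thesis
      using u w vs by auto
  qed
  then have "edge_walk E {x} {y} ?ws"
    using set_path_edges_subset[OF sv] assms(2,3) by (simp add: edge_walk_def)
  then show ?thesis ..
qed

section \<open>Colouring by middle edges\<close>

text \<open>The middle edges of the steps of a shortest walk of edges are distinct, so labelling every
  step injectively by its middle edge makes the corresponding path of L(L(G)) rainbow.\<close>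

lemma rainbow_connected_middle_labels:
  assumes W: "W \<subseteq> E" and conn: "\<And>x y. x \<in> W \<Longrightarrow> y \<in> W \<Longrightarrow> \<exists>ws. edge_walk W {x} {y} ws"
    and meets: "\<And>A. A \<in> line_edges \<Longrightarrow> A \<inter> W \<noteq> {}"
    and inj: "inj_on \<kappa> (middle_edges \<inter> W)"
  shows "rainbow_connected (line_edges, line2_edges) (span_colouring (\<lambda>X. \<kappa>))"
proof (rule rainbow_connected_if_chains)
  fix A B
  assume AB: "A \<in> line_edges" "B \<in> line_edges" "A \<noteq> B"
  obtain x y where xy: "x \<in> A \<inter> W" "y \<in> B \<inter> W"
    using meets AB by blast
  then obtain ws where "edge_walk W {x} {y} ws"
    using conn by blast
  then have "edge_walk W A B ws"
    using xy by (simp add: edge_walk_def)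
  then obtain gs where gs: "shortest_edge_walk W A B gs"
    by (rule shortest_edge_walk_exists)
  then obtain a b where ab: "A = {a, hd gs}" "B = {last gs, b}" and c: "angle_chain (a # gs @ [b])"
    using angle_chain_of_shortest_edge_walk[OF AB W] by blast
  have ne: "gs \<noteq> []" and W_gs: "set gs \<subseteq> W" and dist: "distinct gs"
    using shortest_edge_walkD[OF gs] by (auto simp: edge_walk_def)
  have "set gs \<subseteq> middle_edges"
    using angle_chain_middle_edge[OF c] by (auto simp: in_set_conv_nth nth_append)
  then have "distinct (map \<kappa> gs)"
    using dist W_gs inj_on_subset[OF inj] by (simp add: distinct_map)
  then have "distinct (route_colours (\<lambda>X. \<kappa>) (a # gs @ [b]))"
    using route_colours_comp[of \<kappa> "\<lambda>X f. f"] by (simp add: route_colours_middle)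
  with c ab ne show "\<exists>fs. angle_chain fs \<and> hd (path_edges fs) = A \<and> last (path_edges fs) = B \<and>
      distinct (route_colours (\<lambda>X. \<kappa>) fs)"
    by (metis hd_last_angles_of_route)
qed

lemma middle_edge_colouring:
  assumes "connected_graph (V, E)"
  obtains c where "\<forall>\<epsilon>\<in>line2_edges. c \<epsilon> < card middle_edges"
    "rainbow_connected (line_edges, line2_edges) c"
proof -
  obtain idx where idx: "bij_betw idx middle_edges {0..<card middle_edges}"
    using ex_bij_betw_finite_nat[OF finite_middle_edges] by blast
  have "rainbow_connected (line_edges, line2_edges) (span_colouring (\<lambda>X. idx))"
  proof (rule rainbow_connected_middle_labels[of E])
    show "A \<inter> E \<noteq> {}" if "A \<in> line_edges" for A
      using that by (auto simp: line_edges_def adjacent_edges_def)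
  qed (use idx edge_walk_in_connected_graph[OF assms] in \<open>auto simp: bij_betw_def intro: inj_on_subset\<close>)
  moreover have "span_colouring (\<lambda>X. idx) \<epsilon> < card middle_edges" if "\<epsilon> \<in> line2_edges" for \<epsilon>
    using that idx by (metis span_colouring_line2_edge atLeastLessThan_iff bij_betwE)
  ultimately show ?thesis
    using that by blast
qed

lemma rc_line_line_le_middle_edges:
  assumes "connected_graph (V, E)"
  shows "rc (line_edges, line2_edges) \<le> card middle_edges"
  using middle_edge_colouring[OF assms] rc_le by (metis snd_conv)

lemma pendent_2pathE:
  assumes "P \<in> pendent_2paths (V, E)"
  obtains x y z where "P = {{x, y}, {y, z}}" "{x, y} \<in> E" "{y, z} \<in> E" "x \<noteq> y" "y \<noteq> z" "x \<noteq> z"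
    "{e \<in> E. x \<in> e} = {{x, y}}" "{e \<in> E. y \<in> e} = {{x, y}, {y, z}}"
proof -
  obtain xs where xs: "P = set (path_edges xs)" "is_gpath (V, E) xs" "length xs = 3"
    "degree (V, E) (xs ! 0) = 1" "degree (V, E) (xs ! 1) = 2"
    using assms unfolding pendent_2paths_def by blast
  then obtain x y z where xyz: "xs = [x, y, z]"
    by (auto simp: numeral_3_eq_3 length_Suc_conv)
  then have P: "P = {{x, y}, {y, z}}" and edges: "{x, y} \<in> E" "{y, z} \<in> E" and "x \<noteq> y" "y \<noteq> z" "x \<noteq> z"
    using xs(1,2) by (auto simp: is_gpath_iff_successively)
  moreover have "{e \<in> E. x \<in> e} = {{x, y}}"
  proof -
    obtain t where t: "{e \<in> E. x \<in> e} = {t}"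
      using xs(4) xyz by (auto simp: degree_def card_1_singleton_iff)
    moreover have "{x, y} \<in> {e \<in> E. x \<in> e}"
      using edges by simp
    ultimately show ?thesis
      by (metis singletonD)
  qed
  moreover have "{e \<in> E. y \<in> e} = {{x, y}, {y, z}}"
  proof (rule card_subset_eq[symmetric])
    have "{x, y} \<noteq> {y, z}"
      using \<open>x \<noteq> z\<close> by (auto simp: doubleton_eq_iff)
    then show "card {{x, y}, {y, z}} = card {e \<in> E. y \<in> e}"
      using xs(5) xyz by (simp add: degree_def)
    show "finite {e \<in> E. y \<in> e}"
      using finite_E by simp
    show "{{x, y}, {y, z}} \<subseteq> {e \<in> E. y \<in> e}"
      using edges by simp
  qed
  ultimately show ?thesis
    using that by blast
qed

lemma pendent_2path_subset_card:
  assumes "P \<in> pendent_2paths (V, E)"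
  shows "P \<subseteq> E" "card P = 2"
proof -
  obtain x y z where "P = {{x, y}, {y, z}}" "{x, y} \<in> E" "{y, z} \<in> E" "x \<noteq> z"
    using pendent_2pathE[OF assms] by metis
  moreover have "{x, y} \<noteq> {y, z}"
    using \<open>x \<noteq> z\<close> by (auto simp: doubleton_eq_iff)
  ultimately show "P \<subseteq> E" "card P = 2"
    by simp_all
qed

text \<open>A pendent 2-path is the closed neighbourhood of its pendant edge, and that edge has a
  single neighbour; hence pendent 2-paths inject into the edges that are not middle edges.\<close>

lemma card_pendent_2paths_le: "card (pendent_2paths (V, E)) \<le> card E - card middle_edges"
proof -
  define closed_nbhd where "closed_nbhd e = insert e {g. adjacent_edges g e}" for e
  have "P \<in> closed_nbhd ` (E - middle_edges)" if pendent: "P \<in> pendent_2paths (V, E)" for P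
  proof -
    obtain x y z where P: "P = {{x, y}, {y, z}}" "{x, y} \<in> E" "{y, z} \<in> E" "x \<noteq> y" "y \<noteq> z" "x \<noteq> z"
      and x: "{e \<in> E. x \<in> e} = {{x, y}}" and y: "{e \<in> E. y \<in> e} = {{x, y}, {y, z}}"
      using pendent_2pathE[OF pendent] by blast
    have nbhd: "{g. adjacent_edges g {x, y}} = {{y, z}}"
    proof (intro equalityI subsetI)
      fix g
      assume "g \<in> {g. adjacent_edges g {x, y}}"
      then have "g \<in> {e \<in> E. x \<in> e} \<or> g \<in> {e \<in> E. y \<in> e}" "g \<noteq> {x, y}"
        by (auto simp: adjacent_edges_def)
      then show "g \<in> {{y, z}}"
        using x y by auto
    qed (use P in \<open>auto simp: adjacent_edges_def doubleton_eq_iff\<close>)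
    then have "{x, y} \<notin> middle_edges"
      by (auto simp: middle_edges_def)
    moreover have "closed_nbhd {x, y} = P"
      using nbhd P(1) by (simp add: closed_nbhd_def)
    ultimately show ?thesis
      using P(2) by blast
  qed
  then have "card (pendent_2paths (V, E)) \<le> card (closed_nbhd ` (E - middle_edges))"
    using finite_E by (intro card_mono) auto
  also have "\<dots> \<le> card (E - middle_edges)"
    by (rule card_image_le) (simp add: finite_E)
  also have "\<dots> = card E - card middle_edges"
    by (rule card_Diff_subset[OF finite_middle_edges middle_edges_subset])
  finally show ?thesis .
qed

section \<open>A triangle of L(G) saves a colour\<close>

lemma triangle_label_clash:
  fixes a b :: "'a set" and gs :: "'a set list"
  defines "fs \<equiv> a # gs @ [b]"
  assumes tri: "adjacent_edges e1 e2" "adjacent_edges e1 e3" "adjacent_edges e2 e3"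
    and gs: "shortest_edge_walk E A B gs"
    and t: "t < length gs" "gs ! t = e3" and k: "k < length gs" "k \<noteq> t"
    and eq: "triangle_label e1 e2 e3 {fs ! t, fs ! Suc t, fs ! Suc (Suc t)} e3 = gs ! k"
  shows "k = Suc t \<or> Suc k = t" "gs ! k = e2" "e1 \<in> {fs ! t, fs ! Suc t, fs ! Suc (Suc t)}"
proof -
  have "gs ! k \<inter> gs ! t \<noteq> {}"
    using eq[symmetric] tri t(2) by (simp add: triangle_label_def adjacent_edges_def)
  then have "\<not> Suc t < k" "\<not> Suc k < t"
    using shortest_edge_walkD(5)[OF gs, of t k] shortest_edge_walkD(5)[OF gs, of k t] k t(1)
    by (auto simp: Int_commute)
  then show kt: "k = Suc t \<or> Suc k = t"
    using k by linarith
  then have "gs ! k \<in> {fs ! t, fs ! Suc t, fs ! Suc (Suc t)}"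
    using nth_extended_walk[OF t(1)] k by (auto simp: fs_def)
  then show "gs ! k = e2" "e1 \<in> {fs ! t, fs ! Suc t, fs ! Suc (Suc t)}"
    using eq by (simp_all add: triangle_label_def split: if_splits)
qed

lemma triangle_label_not_elsewhere:
  fixes a b :: "'a set" and gs :: "'a set list"
  defines "fs \<equiv> a # gs @ [b]"
  assumes tri: "adjacent_edges e1 e2" "adjacent_edges e1 e3" "adjacent_edges e2 e3"
    and gs: "shortest_edge_walk E A B gs" and no_turn: "\<not> triangle_turn e1 e2 e3 a gs b"
    and t: "t < length gs" "gs ! t = e3" and k: "k < length gs" "k \<noteq> t"
  shows "triangle_label e1 e2 e3 {fs ! t, fs ! Suc t, fs ! Suc (Suc t)} e3 \<noteq> gs ! k"
proof
  assume "triangle_label e1 e2 e3 {fs ! t, fs ! Suc t, fs ! Suc (Suc t)} e3 = gs ! k"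
  from triangle_label_clash[OF tri gs t k this[unfolded fs_def]]
  have kt: "k = Suc t \<or> Suc k = t" and gk: "gs ! k = e2"
    and e1: "e1 = fs ! t \<or> e1 = fs ! Suc (Suc t)"
    using tri t(2) nth_extended_walk(2)[OF t(1)] by (auto simp: fs_def adjacent_edges_def)
  note fs = nth_extended_walk[OF t(1), of a b, folded fs_def]
  note disjoint = shortest_edge_walkD(5)[OF gs]
  have d: "e1 \<noteq> e2"
    using tri by (simp add: adjacent_edges_def)
  from kt show False
  proof
    assume kt: "k = Suc t"
    then have "fs ! t = e1"
      using e1 fs gk k d by (simp split: if_splits)
    then show False
    proof (cases "t = 0")
      case True
      then show False
        using no_turn \<open>fs ! t = e1\<close> fs t gk kt k by (simp add: triangle_turn_def)
    next
      case False
      then have "gs ! (t - 1) \<inter> gs ! Suc t = {}" "gs ! (t - 1) = e1" "gs ! Suc t = e2"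
        using disjoint[of "t - 1" "Suc t"] \<open>fs ! t = e1\<close> fs gk k kt by simp_all
      then show False
        using tri(1) by (simp add: adjacent_edges_def)
    qed
  next
    assume kt: "Suc k = t"
    then have "fs ! Suc (Suc t) = e1"
      using e1 fs gk d by auto
    show False
    proof (cases "Suc t < length gs")
      case True
      then have "gs ! k \<inter> gs ! Suc t = {}" "gs ! Suc t = e1"
        using disjoint[of k "Suc t"] kt \<open>fs ! Suc (Suc t) = e1\<close> fs by simp_all
      then show False
        using gk tri(1) by (simp add: adjacent_edges_def Int_commute)
    next
      case False
      then have "t = length gs - 1" "b = e1" "length gs - 2 = k"
        using \<open>fs ! Suc (Suc t) = e1\<close> fs t(1) kt by auto
      then show False
        using no_turn t gk kt by (auto simp: triangle_turn_def)
    qed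
  qed
qed

lemma triangle_labels_distinct:
  assumes tri: "adjacent_edges e1 e2" "adjacent_edges e1 e3" "adjacent_edges e2 e3"
    and gs: "shortest_edge_walk E A B gs" and no_turn: "\<not> triangle_turn e1 e2 e3 a gs b"
  shows "distinct (route_colours (triangle_label e1 e2 e3) (a # gs @ [b]))"
proof -
  let ?fs = "a # gs @ [b]"
  let ?lab = "\<lambda>i. triangle_label e1 e2 e3 {?fs ! i, ?fs ! Suc i, ?fs ! Suc (Suc i)} (gs ! i)"
  have dist: "distinct gs"
    using shortest_edge_walkD(2)[OF gs] .
  have route: "route_colours (triangle_label e1 e2 e3) ?fs = map ?lab [0..<length gs]"
    by (rule nth_equalityI) (auto simp: route_colours_def nth_append)
  have "?lab i \<noteq> ?lab j" if ij: "i < length gs" "j < length gs" "i \<noteq> j" for i j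
  proof (cases "gs ! i = e3 \<or> gs ! j = e3")
    case True
    then consider "gs ! i = e3" "gs ! j \<noteq> e3" | "gs ! j = e3" "gs ! i \<noteq> e3"
      using dist ij by (metis nth_eq_iff_index_eq)
    then show ?thesis
    proof cases
      case 1
      then show ?thesis
        using triangle_label_not_elsewhere[OF tri gs no_turn ij(1) 1(1) ij(2) ij(3)[symmetric]]
        by (simp add: triangle_label_def)
    next
      case 2
      then show ?thesis
        using triangle_label_not_elsewhere[OF tri gs no_turn ij(2) 2(1) ij(1) ij(3)]
        by (simp add: triangle_label_def)
    qed
  next
    case False
    then show ?thesis
      using dist ij by (simp add: triangle_label_def nth_eq_iff_index_eq)
  qed
  then show ?thesis
    unfolding route by (simp add: distinct_conv_nth)
qed

lemma set_route_colours_subset: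
  assumes "angle_chain fs" "\<And>X f. f \<in> middle_edges \<Longrightarrow> col X f \<in> S"
  shows "set (route_colours col fs) \<subseteq> S"
  using assms angle_chain_middle_edge[OF assms(1)] by (auto simp: route_colours_def)

lemma triangle_label_mem:
  assumes "adjacent_edges e1 e2" "adjacent_edges e1 e3" "adjacent_edges e2 e3" "f \<in> middle_edges"
  shows "triangle_label e1 e2 e3 X f \<in> middle_edges - {e3}"
proof -
  have "e1 \<noteq> e3" "e2 \<noteq> e3"
    using assms by (simp_all add: adjacent_edges_def)
  moreover from this have "e1 \<in> middle_edges" "e2 \<in> middle_edges"
    using assms(1-3) adjacent_edges_sym by (blast intro: middle_edgesI)+
  ultimately show ?thesis
    using assms(4)
    by (simp add: triangle_label_def)
qed

lemma shortest_edge_walk_around_triangle_turn: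
  assumes tri: "adjacent_edges e1 e2" "adjacent_edges e1 e3" "adjacent_edges e2 e3"
    and gs: "shortest_edge_walk E A B gs" "A = {a, hd gs}" "B = {last gs, b}"
    and turn: "triangle_turn e1 e2 e3 a gs b"
  obtains gs' where "shortest_edge_walk E A B gs'" "e3 \<notin> set gs'"
proof -
  have e1: "e1 \<in> E" "e1 \<noteq> e3" "e1 \<inter> e2 \<noteq> {}"
    using tri by (auto simp: adjacent_edges_def)
  have dist: "distinct gs" and ne: "gs \<noteq> []"
    using shortest_edge_walkD(1,2)[OF gs(1)] by (auto simp: edge_walk_def)
  consider "a = e1" "gs ! 0 = e3" "2 \<le> length gs" "gs ! 1 = e2"
    | "b = e1" "gs ! (length gs - 1) = e3" "2 \<le> length gs" "gs ! (length gs - 2) = e2"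
    using turn unfolding triangle_turn_def by blast
  then show thesis
  proof cases
    case 1
    then have "shortest_edge_walk E A B (e1 # tl gs)"
      using shortest_edge_walk_replace_hd[OF gs(1)] gs(2) e1 by simp
    moreover have "e3 \<notin> set (e1 # tl gs)"
      using dist 1 ne e1 by (cases gs) auto
    ultimately show thesis
      using that by blast
  next
    case 2
    then have "shortest_edge_walk E A B (butlast gs @ [e1])"
      using shortest_edge_walk_replace_last[OF gs(1)] gs(3) e1 by (simp add: Int_commute)
    moreover have "e3 \<notin> set (butlast gs @ [e1])"
    proof -
      have "distinct (butlast gs @ [last gs])"
        using dist ne by (metis append_butlast_last_id)
      moreover have "last gs = e3"
        using 2 ne by (simp add: last_conv_nth)
      ultimately show ?thesis
        using e1 by auto
    qed
    ultimately show thesis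
      using that by blast
  qed
qed

lemma shortest_route_avoiding_triangle_turns:
  assumes conn: "connected_graph (V, E)"
    and tri: "adjacent_edges e1 e2" "adjacent_edges e1 e3" "adjacent_edges e2 e3"
    and AB: "A \<in> line_edges" "B \<in> line_edges" "A \<noteq> B"
  obtains gs a b where "shortest_edge_walk E A B gs" "A = {a, hd gs}" "B = {last gs, b}"
    "angle_chain (a # gs @ [b])" "\<not> triangle_turn e1 e2 e3 a gs b"
proof -
  obtain x y where xy: "x \<in> A" "x \<in> E" "y \<in> B" "y \<in> E"
    using AB by (auto simp: line_edges_def adjacent_edges_def)
  then obtain ws where "edge_walk E {x} {y} ws"
    using edge_walk_in_connected_graph[OF conn] by blast
  then have "edge_walk E A B ws"
    using xy by (simp add: edge_walk_def)
  then obtain gs where gs: "shortest_edge_walk E A B gs"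
    by (rule shortest_edge_walk_exists)
  obtain a b where ab: "A = {a, hd gs}" "B = {last gs, b}" "angle_chain (a # gs @ [b])"
    using angle_chain_of_shortest_edge_walk[OF AB order.refl gs] .
  show thesis
  proof (cases "triangle_turn e1 e2 e3 a gs b")
    case True
    then obtain gs' where gs': "shortest_edge_walk E A B gs'" "e3 \<notin> set gs'"
      using shortest_edge_walk_around_triangle_turn[OF tri gs ab(1,2)] by blast
    obtain a' b' where "A = {a', hd gs'}" "B = {last gs', b'}" "angle_chain (a' # gs' @ [b'])"
      using angle_chain_of_shortest_edge_walk[OF AB order.refl gs'(1)] .
    moreover have "\<not> triangle_turn e1 e2 e3 a' gs' b'"
      using gs'(2) triangle_turn_middle_in_walk[of e1 e2 e3 a' gs' b'] by blast
    ultimately show thesis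
      using that gs'(1) by blast
  qed (use that gs ab in blast)
qed

lemma rc_line_line_lt_middle_edges_if_triangle:
  assumes conn: "connected_graph (V, E)"
    and tri: "adjacent_edges e1 e2" "adjacent_edges e1 e3" "adjacent_edges e2 e3"
  shows "rc (line_edges, line2_edges) < card middle_edges"
proof -
  have "e1 \<noteq> e2"
    using tri by (simp add: adjacent_edges_def)
  then have "e3 \<in> middle_edges"
    using tri adjacent_edges_sym by (blast intro: middle_edgesI)
  then have card: "card (middle_edges - {e3}) = card middle_edges - 1" "0 < card middle_edges"
    using finite_middle_edges by (auto simp: card_gt_0_iff)
  obtain idx where idx: "bij_betw idx (middle_edges - {e3}) {0..<card middle_edges - 1}"
    using ex_bij_betw_finite_nat[of "middle_edges - {e3}"] finite_middle_edges card(1) by auto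
  let ?col = "\<lambda>X f. idx (triangle_label e1 e2 e3 X f)"
  have "rainbow_connected (line_edges, line2_edges) (span_colouring ?col)"
  proof (rule rainbow_connected_if_chains)
    fix A B
    assume "A \<in> line_edges" "B \<in> line_edges" "A \<noteq> B"
    then obtain gs a b where gs: "shortest_edge_walk E A B gs" and ab: "A = {a, hd gs}" "B = {last gs, b}"
      and c: "angle_chain (a # gs @ [b])" and no_turn: "\<not> triangle_turn e1 e2 e3 a gs b"
      using shortest_route_avoiding_triangle_turns[OF conn tri] by metis
    have "set (route_colours (triangle_label e1 e2 e3) (a # gs @ [b])) \<subseteq> middle_edges - {e3}"
      using set_route_colours_subset[OF c] triangle_label_mem[OF tri] by blast
    then have "inj_on idx (set (route_colours (triangle_label e1 e2 e3) (a # gs @ [b])))"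
      using idx by (auto simp: bij_betw_def intro: inj_on_subset)
    then have "distinct (route_colours ?col (a # gs @ [b]))"
      using triangle_labels_distinct[OF tri gs no_turn] by (simp add: route_colours_comp distinct_map)
    moreover have "gs \<noteq> []"
      using shortest_edge_walkD(1)[OF gs] by (simp add: edge_walk_def)
    ultimately show "\<exists>fs. angle_chain fs \<and> hd (path_edges fs) = A \<and> last (path_edges fs) = B \<and>
        distinct (route_colours ?col fs)"
      using c ab by (metis hd_last_angles_of_route)
  qed
  then have "rc (line_edges, line2_edges) \<le> card middle_edges - 1"
    by (rule rc_le_span_colouring) (use idx triangle_label_mem[OF tri] in \<open>auto simp: bij_betw_def\<close>)
  with card(2) show ?thesis
    by linarith
qed

section \<open>Graphs of maximum degree two\<close>

lemma longest_gpath_exists: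
  assumes "E \<noteq> {}"
  obtains xs where "longest_gpath (V, E) xs" "2 \<le> length xs"
proof -
  obtain u v where uv: "{u, v} \<in> E" "u \<noteq> v" "u \<in> V" "v \<in> V"
    using assms by (metis all_not_in_conv edgeE)
  then have uv_path: "is_gpath (V, E) [u, v]"
    by (simp add: is_gpath_iff_successively)
  have "length ys < Suc (card V)" if "is_gpath (V, E) ys" for ys
    using that distinct_card[of ys] card_mono[OF finite_V, of "set ys"]
    by (simp add: is_gpath_iff_successively)
  then obtain xs where "is_gpath (V, E) xs" "\<forall>ys. is_gpath (V, E) ys \<longrightarrow> length ys \<le> length xs"
    using ex_has_greatest_nat[of "is_gpath (V, E)" "[u, v]" length "Suc (card V)"] uv_path by blast
  moreover from this have "2 \<le> length xs"
    using uv_path by fastforce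
  ultimately show ?thesis
    using that by (auto simp: longest_gpath_def)
qed

lemma edges_at_vertex_of_degree_le_2:
  assumes "degree (V, E) u \<le> 2" "e \<in> E" "f \<in> E" "g \<in> E" "u \<in> e" "u \<in> f" "u \<in> g" "e \<noteq> f"
  shows "g = e \<or> g = f"
proof (rule ccontr)
  assume "\<not> (g = e \<or> g = f)"
  then have "card {e, f, g} = 3"
    using assms(8) by (simp add: card_insert_if eq_commute[of g])
  moreover have "card {e, f, g} \<le> card {h \<in> E. u \<in> h}"
    by (rule card_mono) (use finite_E assms(2-7) in simp_all)
  ultimately show False
    using assms(1) by (simp add: degree_def)
qed

lemma edge_at_interior_vertex:
  assumes deg: "\<forall>v\<in>V. degree (V, E) v \<le> 2" and xs: "is_gpath (V, E) xs"
    and j: "0 < j" "Suc j < length xs" and h: "h \<in> E" "xs ! j \<in> h"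
  shows "h = {xs ! (j - 1), xs ! j} \<or> h = {xs ! j, xs ! Suc j}"
proof (rule edges_at_vertex_of_degree_le_2)
  have "xs ! j \<in> set xs"
    using j by simp
  with deg xs show "degree (V, E) (xs ! j) \<le> 2"
    by (auto simp: is_gpath_def)
  show "{xs ! (j - 1), xs ! j} \<in> E" "{xs ! j, xs ! Suc j} \<in> E"
    using is_gpath_edge[OF xs, of "j - 1"] is_gpath_edge[OF xs, of j] j by simp_all
  have "xs ! (j - 1) \<noteq> xs ! Suc j"
    using xs j by (simp add: is_gpath_def nth_eq_iff_index_eq)
  then show "{xs ! (j - 1), xs ! j} \<noteq> {xs ! j, xs ! Suc j}"
    using xs j by (auto simp: is_gpath_def doubleton_eq_iff nth_eq_iff_index_eq)
qed (use h in auto)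

lemma edge_at_first_vertex_of_longest_path:
  assumes deg: "\<forall>v\<in>V. degree (V, E) v \<le> 2" and xs: "longest_gpath (V, E) xs" "2 \<le> length xs"
    and g: "g \<in> E" "hd xs \<in> g"
  shows "g \<in> insert {last xs, hd xs} (set (path_edges xs))"
proof -
  let ?n = "length xs"
  have path: "is_gpath (V, E) xs" and longest: "\<And>ys. is_gpath (V, E) ys \<Longrightarrow> length ys \<le> ?n"
    using xs(1) by (auto simp: longest_gpath_def)
  have dist: "distinct xs" and ne: "xs \<noteq> []" and hd: "hd xs = xs ! 0"
    using path by (auto simp: is_gpath_def hd_conv_nth)
  obtain w where w: "g = {hd xs, w}" "w \<noteq> hd xs" "w \<in> V"
    using g by (auto elim!: edgeE simp: insert_commute)
  have "w \<in> set xs"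
  proof (rule ccontr)
    assume "w \<notin> set xs"
    then have "is_gpath (V, E) (w # xs)"
      using path g(1) w ne by (auto simp: is_gpath_iff_successively successively_Cons insert_commute)
    with longest show False
      by fastforce
  qed
  then obtain j where j: "j < ?n" "xs ! j = w" "j \<noteq> 0"
    using w hd by (auto simp: in_set_conv_nth)
  consider "j = 1" | "j = ?n - 1" | "1 < j" "Suc j < ?n"
    using j by linarith
  then show ?thesis
  proof cases
    case 1
    then show ?thesis
      using edge_in_set_path_edges[of 0 xs] xs(2) w j hd by auto
  next
    case 2
    then show ?thesis
      using w j ne by (simp add: last_conv_nth insert_commute)
  next
    case 3
    have "xs ! 0 \<noteq> xs ! k" if "0 < k" "k < ?n" for k
      using that ne nth_eq_iff_index_eq[OF dist, of 0 k] by simp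
    then have "hd xs \<notin> {xs ! (j - 1), xs ! j}" "hd xs \<notin> {xs ! j, xs ! Suc j}"
      using 3 hd by auto
    moreover have "g = {xs ! (j - 1), xs ! j} \<or> g = {xs ! j, xs ! Suc j}"
      using edge_at_interior_vertex[OF deg path _ 3(2) g(1)] 3 w j by simp
    ultimately show ?thesis
      using g(2) by auto
  qed
qed

lemma edge_at_vertex_of_longest_path:
  assumes deg: "\<forall>v\<in>V. degree (V, E) v \<le> 2" and xs: "longest_gpath (V, E) xs" "2 \<le> length xs"
    and g: "g \<in> E" "x \<in> g" "x \<in> set xs"
  shows "g \<in> insert {last xs, hd xs} (set (path_edges xs))"
proof -
  have path: "is_gpath (V, E) xs"
    using xs(1) by (simp add: longest_gpath_def)
  obtain i where i: "i < length xs" "xs ! i = x"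
    using g(3) by (auto simp: in_set_conv_nth)
  consider "0 < i" "Suc i < length xs" | "i = 0" | "i = length xs - 1"
    using i by linarith
  then show ?thesis
  proof cases
    case 1
    then show ?thesis
      using edge_at_interior_vertex[OF deg path 1 g(1)] edge_in_set_path_edges[of "i - 1" xs]
        edge_in_set_path_edges[of i xs] i g(2) by auto
  next
    case 2
    then show ?thesis
      using edge_at_first_vertex_of_longest_path[OF deg xs g(1)] i path g(2)
      by (simp add: is_gpath_def hd_conv_nth)
  next
    case 3
    have "hd (rev xs) \<in> g"
      using 3 i path g(2) by (simp add: is_gpath_def hd_rev last_conv_nth)
    then show ?thesis
      using edge_at_first_vertex_of_longest_path[OF deg longest_gpath_rev[OF xs(1)] _ g(1)] xs(2)
      by (auto simp: path_edges_rev hd_rev last_rev insert_commute)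
  qed
qed

lemma longest_path_covers_max_degree_2:
  assumes conn: "connected_graph (V, E)" and deg: "\<forall>v\<in>V. degree (V, E) v \<le> 2"
    and xs: "longest_gpath (V, E) xs" "2 \<le> length xs"
  shows "set xs = V" "E \<subseteq> insert {last xs, hd xs} (set (path_edges xs))"
proof -
  let ?F = "insert {last xs, hd xs} (set (path_edges xs))"
  have ne: "xs \<noteq> []" and sub: "set xs \<subseteq> V"
    using xs(1) by (auto simp: longest_gpath_def is_gpath_def)
  have F_vertices: "e \<subseteq> set xs" if "e \<in> ?F" for e
    using that ne by (auto simp: in_set_conv_nth[of e] nth_path_edges)
  have "V \<subseteq> set xs"
  proof (rule connected_graph_edge_closed[OF conn])
    show "hd xs \<in> set xs" "hd xs \<in> V"
      using ne sub by auto
    show "e \<subseteq> set xs" if "e \<in> E" "e \<inter> set xs \<noteq> {}" for e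
      using that edge_at_vertex_of_longest_path[OF deg xs] F_vertices by blast
  qed
  with sub show V: "set xs = V"
    by blast
  show "E \<subseteq> ?F"
  proof
    fix g
    assume g: "g \<in> E"
    then obtain u where "u \<in> g" "u \<in> V"
      by (auto elim: edgeE)
    with g V show "g \<in> ?F"
      using edge_at_vertex_of_longest_path[OF deg xs] by blast
  qed
qed

lemma max_degree_2_path_or_cycle:
  assumes conn: "connected_graph (V, E)" and "E \<noteq> {}" and deg: "\<forall>v\<in>V. degree (V, E) v \<le> 2"
  obtains xs where "is_gpath (V, E) xs" "set xs = V" "2 \<le> length xs"
    "E = set (path_edges xs) \<or>
     3 \<le> length xs \<and> {last xs, hd xs} \<notin> set (path_edges xs) \<and>
     E = insert {last xs, hd xs} (set (path_edges xs))"
proof -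
  obtain xs where xs: "longest_gpath (V, E) xs" "2 \<le> length xs"
    using longest_gpath_exists[OF \<open>E \<noteq> {}\<close>] .
  have path: "is_gpath (V, E) xs"
    using xs(1) by (simp add: longest_gpath_def)
  then have ne: "xs \<noteq> []" and path_E: "set (path_edges xs) \<subseteq> E"
    using set_path_edges_subset by (auto simp: is_gpath_iff_successively)
  note cover = longest_path_covers_max_degree_2[OF conn deg xs]
  show ?thesis
  proof (cases "{last xs, hd xs} \<in> E \<and> {last xs, hd xs} \<notin> set (path_edges xs)")
    case True
    have "3 \<le> length xs"
    proof (rule ccontr)
      assume "\<not> 3 \<le> length xs"
      then have "length xs = 2"
        using xs(2) by simp
      then have "{last xs, hd xs} \<in> set (path_edges xs)"
        using edge_in_set_path_edges[of 0 xs] ne by (simp add: hd_conv_nth last_conv_nth insert_commute)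
      with True show False
        by simp
    qed
    moreover have "E = insert {last xs, hd xs} (set (path_edges xs))"
      using cover(2) path_E True by auto
    ultimately show ?thesis
      using that[OF path cover(1) xs(2)] True by simp
  next
    case False
    then have "E = set (path_edges xs)"
      using cover(2) path_E by auto
    then show ?thesis
      using that[OF path cover(1) xs(2)] by simp
  qed
qed

lemma rc_line_line_lt_middle_edges_if_removable:
  assumes conn: "\<And>x y. x \<in> E - {e} \<Longrightarrow> y \<in> E - {e} \<Longrightarrow> \<exists>ws. edge_walk (E - {e}) {x} {y} ws"
    and e: "e \<in> middle_edges" and e': "e' \<in> middle_edges" "e' \<noteq> e"
  shows "rc (line_edges, line2_edges) < card middle_edges"
proof -
  have card: "card (middle_edges - {e}) = card middle_edges - 1" "0 < card middle_edges"
    using e finite_middle_edges by (auto simp: card_gt_0_iff)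
  obtain idx where idx: "bij_betw idx (middle_edges - {e}) {0..<card middle_edges - 1}"
    using ex_bij_betw_finite_nat[of "middle_edges - {e}"] finite_middle_edges card(1) by auto
  let ?\<kappa> = "\<lambda>f. idx (if f = e then e' else f)"
  have "rainbow_connected (line_edges, line2_edges) (span_colouring (\<lambda>X. ?\<kappa>))"
  proof (rule rainbow_connected_middle_labels[of "E - {e}"])
    show "A \<inter> (E - {e}) \<noteq> {}" if "A \<in> line_edges" for A
      using line_edge_meets[OF that, of e] e middle_edges_subset by blast
    show "inj_on ?\<kappa> (middle_edges \<inter> (E - {e}))"
      using idx by (auto simp: bij_betw_def inj_on_def)
  qed (use conn in auto)
  then have "rc (line_edges, line2_edges) \<le> card middle_edges - 1"
    by (rule rc_le_span_colouring) (use idx e' in \<open>auto simp: bij_betw_def\<close>)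
  with card(2) show ?thesis
    by linarith
qed

lemma rc_line_line_lt_middle_edges_if_cycle:
  assumes xs: "is_gpath (V, E) xs" "3 \<le> length xs"
    and closing: "{last xs, hd xs} \<notin> set (path_edges xs)"
    and E: "E = insert {last xs, hd xs} (set (path_edges xs))"
  shows "rc (line_edges, line2_edges) < card middle_edges"
proof -
  let ?n = "length xs"
  let ?p = "path_edges xs"
  let ?e = "{xs ! (?n - 1), xs ! 0}"
  have ne: "xs \<noteq> []" and dist: "distinct xs"
    using xs by (auto simp: is_gpath_def)
  then have e: "?e = {last xs, hd xs}"
    by (simp add: hd_conv_nth last_conv_nth)
  have p: "?p ! 0 = {xs ! 0, xs ! 1}" "?p ! 1 = {xs ! 1, xs ! 2}"
    "?p ! (?n - 2) = {xs ! (?n - 2), xs ! (?n - 1)}"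
    using xs(2) by (simp_all add: nth_path_edges numeral_2_eq_2 Suc_diff_Suc)
  have in_p: "?p ! 0 \<in> set ?p" "?p ! 1 \<in> set ?p" "?p ! (?n - 2) \<in> set ?p"
    using xs(2) by (auto intro!: nth_mem)
  then have in_E: "?p ! 0 \<in> E" "?p ! 1 \<in> E" "?p ! (?n - 2) \<in> E" "?e \<in> E"
    using E e by auto
  have not_e: "?p ! 0 \<noteq> ?e" "?p ! 1 \<noteq> ?e" "?p ! (?n - 2) \<noteq> ?e"
    using in_p closing e by auto
  have "xs ! 0 \<noteq> xs ! k" if "0 < k" "k < ?n" for k
    using that ne nth_eq_iff_index_eq[OF dist, of 0 k] by simp
  then have x0: "xs ! 0 \<noteq> xs ! (?n - 2)" "xs ! 0 \<noteq> xs ! (?n - 1)" "xs ! 0 \<noteq> xs ! 1" "xs ! 0 \<noteq> xs ! 2"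
    using xs(2) by auto
  have "adjacent_edges (?p ! 0) ?e" "adjacent_edges ?e (?p ! (?n - 2))"
    using in_E not_e p by (auto simp: adjacent_edges_def)
  moreover have "?p ! 0 \<noteq> ?p ! (?n - 2)"
    using p x0 by (auto simp: doubleton_eq_iff)
  ultimately have e_middle: "?e \<in> middle_edges"
    by (rule middle_edgesI)
  have "adjacent_edges ?e (?p ! 0)" "adjacent_edges (?p ! 0) (?p ! 1)"
    using in_E not_e p x0 by (auto simp: adjacent_edges_def doubleton_eq_iff)
  then have p0_middle: "?p ! 0 \<in> middle_edges"
    using not_e(2) by (blast intro: middle_edgesI)
  have walks: "\<exists>ws. edge_walk (E - {?e}) {x} {y} ws" if "x \<in> E - {?e}" "y \<in> E - {?e}" for x y
    using edge_walk_within_path[of x xs y] that E e closing by auto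
  show ?thesis
    using rc_line_line_lt_middle_edges_if_removable[OF walks e_middle p0_middle not_e(1)] by simp
qed

section \<open>Paths of length at least three\<close>

definition spanning_path :: "'a list \<Rightarrow> bool" where
  "spanning_path xs \<longleftrightarrow> is_gpath (V, E) xs \<and> set xs = V \<and> set (path_edges xs) = E"

lemma is_path_graph_len_ge3_iff: "is_path_graph_len_ge3 (V, E) \<longleftrightarrow> (\<exists>xs. spanning_path xs \<and> 4 \<le> length xs)"
  by (auto simp: is_path_graph_len_ge3_def spanning_path_def)

lemma spanning_path_rev: "spanning_path xs \<Longrightarrow> spanning_path (rev xs)"
  by (auto simp: spanning_path_def is_gpath_rev path_edges_rev)

lemma connected_if_spanning_path:
  assumes "spanning_path xs"
  shows "connected_graph (V, E)"
proof -
  have path: "is_gpath (V, E) xs" and V: "set xs = V"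
    using assms by (auto simp: spanning_path_def)
  have "\<exists>ys. is_gpath (V, E) ys \<and> hd ys = xs ! a \<and> last ys = xs ! b"
    if "a < length xs" "b < length xs" for a b
  proof (cases "a \<le> b")
    case True
    then show ?thesis
      using is_gpath_slice[OF path True that(2)] by blast
  next
    case False
    then have "is_gpath (V, E) (rev (drop b (take (Suc a) xs)))"
      "hd (rev (drop b (take (Suc a) xs))) = xs ! a" "last (rev (drop b (take (Suc a) xs))) = xs ! b"
      using is_gpath_slice[OF path _ that(1), of b] is_gpath_rev
      by (simp_all add: hd_rev last_rev)
    then show ?thesis
      by blast
  qed
  then show ?thesis
    using path V by (auto simp: connected_graph_def is_gpath_def in_set_conv_nth)
qed

lemma card_E_spanning_path: "spanning_path xs \<Longrightarrow> card E = length xs - 1"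
  using distinct_card[OF distinct_path_edges, of xs] by (auto simp: spanning_path_def is_gpath_def)

lemma edges_at_spanning_path_vertex:
  assumes "spanning_path xs" "j < length xs"
  shows "{e \<in> E. xs ! j \<in> e} = (\<lambda>i. path_edges xs ! i) ` {i. i < length xs - 1 \<and> (i = j \<or> Suc i = j)}"
proof -
  have "distinct xs" "E = set (path_edges xs)"
    using assms(1) by (auto simp: spanning_path_def is_gpath_def)
  with assms(2) show ?thesis
    using vertex_in_nth_path_edges_iff by (fastforce simp: in_set_conv_nth)
qed

lemma pendent_2path_at_start:
  assumes xs: "spanning_path xs" "3 \<le> length xs"
  shows "{{xs ! 0, xs ! 1}, {xs ! 1, xs ! 2}} \<in> pendent_2paths (V, E)"
proof -
  let ?p = "path_edges xs"
  have path: "is_gpath (V, E) xs" and dist_p: "distinct ?p" and ne: "xs \<noteq> []"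
    using xs(1) distinct_path_edges by (auto simp: spanning_path_def is_gpath_def)
  have "{i. i < length xs - 1 \<and> (i = 0 \<or> Suc i = 0)} = {0}"
    using xs(2) by auto
  then have "{e \<in> E. xs ! 0 \<in> e} = {?p ! 0}"
    using edges_at_spanning_path_vertex[OF xs(1), of 0] ne by simp
  then have "degree (V, E) (xs ! 0) = 1"
    by (simp add: degree_def)
  moreover have "{i. i < length xs - 1 \<and> (i = 1 \<or> Suc i = 1)} = {0, 1}"
    using xs(2) by auto
  then have "{e \<in> E. xs ! 1 \<in> e} = {?p ! 0, ?p ! 1}"
    using edges_at_spanning_path_vertex[OF xs(1), of 1] xs(2) by simp
  then have "degree (V, E) (xs ! 1) = 2"
    using dist_p xs(2) by (simp add: degree_def nth_eq_iff_index_eq)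
  moreover have "is_gpath (V, E) (take 3 xs)"
    using is_gpath_slice(1)[OF path, of 0 2] xs(2) by (simp add: numeral_3_eq_3)
  moreover have "take 3 xs = [xs ! 0, xs ! 1, xs ! 2]"
    using xs(2) by (intro nth_equalityI) (auto simp: numeral_3_eq_3 numeral_2_eq_2 less_Suc_eq)
  ultimately show ?thesis
    unfolding pendent_2paths_def by (intro CollectI exI[of _ "take 3 xs"]) simp
qed

lemma two_le_card_pendent_2paths:
  assumes xs: "spanning_path xs" "4 \<le> length xs"
  shows "2 \<le> card (pendent_2paths (V, E))"
proof -
  let ?n = "length xs"
  let ?P = "{{xs ! 0, xs ! 1}, {xs ! 1, xs ! 2}}"
  let ?Q = "{{rev xs ! 0, rev xs ! 1}, {rev xs ! 1, rev xs ! 2}}"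
  have P: "?P \<in> pendent_2paths (V, E)"
    using pendent_2path_at_start[OF xs(1)] xs(2) by simp
  have Q: "?Q \<in> pendent_2paths (V, E)"
    using pendent_2path_at_start[OF spanning_path_rev[OF xs(1)]] xs(2) by simp
  have dist: "distinct xs" and ne: "xs \<noteq> []"
    using xs(1) by (simp_all add: spanning_path_def is_gpath_def)
  have "xs ! 0 = rev xs ! (?n - 1)"
    using ne by (simp add: rev_nth)
  then have neq: "xs ! 0 \<noteq> rev xs ! i" if "i < 3" for i
    using that xs(2) dist nth_eq_iff_index_eq[of "rev xs" "?n - 1" i] by simp
  have "xs ! 0 \<notin> {rev xs ! 0, rev xs ! 1}" "xs ! 0 \<notin> {rev xs ! 1, rev xs ! 2}"
    using neq[of 0] neq[of 1] neq[of 2] by simp_all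
  then have "{xs ! 0, xs ! 1} \<noteq> {rev xs ! 0, rev xs ! 1}" "{xs ! 0, xs ! 1} \<noteq> {rev xs ! 1, rev xs ! 2}"
    by blast+
  then have "{xs ! 0, xs ! 1} \<notin> ?Q"
    by simp
  moreover have "{xs ! 0, xs ! 1} \<in> ?P"
    by simp
  ultimately have "?P \<noteq> ?Q"
    by metis
  moreover have "pendent_2paths (V, E) \<subseteq> Pow E"
    using pendent_2path_subset_card(1) by blast
  then have "finite (pendent_2paths (V, E))"
    using finite_E by (simp add: finite_subset)
  ultimately show ?thesis
    using card_mono[of "pendent_2paths (V, E)" "{?P, ?Q}"] P Q by simp
qed

lemma path_angle_in_line_edges:
  assumes "spanning_path xs" "Suc i < length xs - 1"
  shows "path_angle xs i \<in> line_edges"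
proof -
  let ?p = "path_edges xs"
  have "distinct ?p" "set ?p = E"
    using assms(1) distinct_path_edges by (auto simp: spanning_path_def is_gpath_def)
  then have "?p ! i \<in> E" "?p ! Suc i \<in> E" "?p ! i \<noteq> ?p ! Suc i"
    using assms(2) nth_mem[of i ?p] nth_mem[of "Suc i" ?p] by (auto simp: nth_eq_iff_index_eq)
  moreover have "xs ! Suc i \<in> ?p ! i \<inter> ?p ! Suc i"
    using assms(2) by (simp add: nth_path_edges)
  ultimately have "adjacent_edges (?p ! i) (?p ! Suc i)"
    unfolding adjacent_edges_def by blast
  then show ?thesis
    by (auto simp: line_edges_def path_angle_def)
qed

lemma line_edge_is_path_angle:
  assumes xs: "spanning_path xs" and "\<beta> \<in> line_edges"
  obtains i where "Suc i < length xs - 1" "\<beta> = path_angle xs i"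
proof -
  let ?p = "path_edges xs"
  have dist: "distinct xs" and E: "set ?p = E"
    using xs by (auto simp: spanning_path_def is_gpath_def)
  obtain e f where ef: "\<beta> = {e, f}" "adjacent_edges e f"
    using assms(2) by (auto simp: line_edges_def)
  then have "e \<in> set ?p" "f \<in> set ?p" "e \<noteq> f"
    using E by (simp_all add: adjacent_edges_def)
  then obtain a b where ab: "a < length xs - 1" "?p ! a = e" "b < length xs - 1" "?p ! b = f" "a \<noteq> b"
    by (metis in_set_conv_nth length_path_edges)
  have meet: "?p ! a \<inter> ?p ! b \<noteq> {}"
    using ef(2) ab by (simp add: adjacent_edges_def)
  show ?thesis
  proof (cases "a < b")
    case True
    have "b = Suc a"
      by (rule path_edges_meet_imp_consecutive[OF dist True ab(3) meet])
    then show ?thesis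
      using that[of a] ab ef by (simp add: path_angle_def)
  next
    case False
    then have "a = Suc b"
      using path_edges_meet_imp_consecutive[OF dist _ ab(1)] meet ab(5) by (simp add: Int_commute)
    then show ?thesis
      using that[of b] ab ef by (simp add: path_angle_def insert_commute)
  qed
qed

lemma line2_path_from_first_angle:
  assumes xs: "spanning_path xs" and ys: "is_gpath (line_edges, line2_edges) ys"
    and hd: "hd ys = path_angle xs 0" and k: "k < length ys" and n: "3 \<le> length xs"
  shows "\<exists>i\<le>k. Suc i < length xs - 1 \<and> ys ! k = path_angle xs i"
  using k
proof (induction k)
  case 0
  then show ?case
    using hd n by (auto simp: hd_conv_nth)
next
  case (Suc k)
  then obtain i where i: "i \<le> k" "Suc i < length xs - 1" "ys ! k = path_angle xs i"
    by auto
  have "ys ! Suc k \<in> line_edges" "{ys ! k, ys ! Suc k} \<in> line2_edges"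
    using ys Suc.prems is_gpath_edge[OF ys Suc.prems] by (auto simp: is_gpath_def)
  moreover obtain j where j: "Suc j < length xs - 1" "ys ! Suc k = path_angle xs j"
    using line_edge_is_path_angle[OF xs calculation(1)] by blast
  ultimately have "path_angle xs i \<inter> path_angle xs j \<noteq> {}"
    using i(3) by (auto simp: line2_edges_def doubleton_eq_iff)
  then have "j \<le> Suc i"
    using path_angles_meet i(2) j(1) xs by (auto simp: spanning_path_def is_gpath_def)
  with i j show ?case
    by (intro exI[of _ j]) auto
qed

lemma rc_ge_spanning_path:
  assumes xs: "spanning_path xs" and n: "4 \<le> length xs"
  shows "length xs - 3 \<le> rc (line_edges, line2_edges)"
proof -
  obtain c where c: "\<forall>\<epsilon>\<in>line2_edges. c \<epsilon> < card middle_edges"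
    "rainbow_connected (line_edges, line2_edges) c"
    using middle_edge_colouring[OF connected_if_spanning_path[OF xs]] .
  show ?thesis
  proof (rule rc_ge_if_far)
    show "\<forall>\<epsilon>\<in>snd (line_edges, line2_edges). c \<epsilon> < card middle_edges"
      using c(1) by simp
    show "path_angle xs 0 \<in> fst (line_edges, line2_edges)"
      "path_angle xs (length xs - 3) \<in> fst (line_edges, line2_edges)"
      using path_angle_in_line_edges[OF xs] n by auto
    fix ys
    assume ys: "is_gpath (line_edges, line2_edges) ys" "hd ys = path_angle xs 0"
      "last ys = path_angle xs (length xs - 3)"
    then have ne: "ys \<noteq> []"
      by (simp add: is_gpath_def)
    obtain i where i: "i \<le> length ys - 1" "Suc i < length xs - 1" "ys ! (length ys - 1) = path_angle xs i"
      using line2_path_from_first_angle[OF xs ys(1,2), of "length ys - 1"] ne n by auto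
    then have "i = length xs - 3"
      using path_angle_inj[of xs i "length xs - 3"] xs ys(3) ne n
      by (auto simp: spanning_path_def is_gpath_def last_conv_nth)
    moreover have "0 < length ys"
      using ne by simp
    ultimately show "length xs - 3 < length ys"
      using i(1) by linarith
  qed (use c(2) in simp)
qed

lemma triangle_if_degree_ge_3:
  assumes "3 \<le> degree (V, E) v"
  obtains e1 e2 e3 where "adjacent_edges e1 e2" "adjacent_edges e1 e3" "adjacent_edges e2 e3"
proof -
  obtain T where "T \<subseteq> {e \<in> E. v \<in> e}" "card T = 3"
    using obtain_subset_with_card_n[of 3 "{e \<in> E. v \<in> e}"] assms by (auto simp: degree_def)
  then obtain e1 e2 e3 where "e1 \<noteq> e2" "e1 \<noteq> e3" "e2 \<noteq> e3" "{e1, e2, e3} \<subseteq> {e \<in> E. v \<in> e}"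
    by (auto simp: card_3_iff)
  then have "adjacent_edges e1 e2" "adjacent_edges e1 e3" "adjacent_edges e2 e3"
    unfolding adjacent_edges_def by blast+
  then show ?thesis
    using that by blast
qed

lemma small_graph:
  assumes "E \<noteq> {}" "card E \<le> 2"
  shows "middle_edges = {}" "card (pendent_2paths (V, E)) < card E"
proof -
  show "middle_edges = {}"
  proof (rule ccontr)
    assume "middle_edges \<noteq> {}"
    then obtain a b f where "f \<in> E" "a \<noteq> b" "adjacent_edges a f" "adjacent_edges b f"
      by (auto simp: middle_edges_def)
    then have "{a, b, f} \<subseteq> E" "card {a, b, f} = 3"
      by (auto simp: adjacent_edges_def)
    then have "3 \<le> card E"
      using card_mono[OF finite_E] by metis
    with assms(2) show False
      by simp
  qed
  have whole: "P = E" "card E = 2" if "P \<in> pendent_2paths (V, E)" for P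
  proof -
    have "P \<subseteq> E" "card P = 2"
      using pendent_2path_subset_card[OF that] by simp_all
    moreover from this have "card P \<le> card E"
      using card_mono[OF finite_E] by blast
    ultimately show "card E = 2" "P = E"
      using assms(2) card_subset_eq[OF finite_E] by simp_all
  qed
  then have "pendent_2paths (V, E) \<subseteq> {E}"
    by blast
  then have "card (pendent_2paths (V, E)) \<le> 1"
    using card_mono[of "{E}"] by fastforce
  moreover have "pendent_2paths (V, E) = {}" if "card E \<noteq> 2"
    using whole(2) that by blast
  moreover have "0 < card E"
    using assms(1) finite_E by (simp add: card_gt_0_iff)
  ultimately show "card (pendent_2paths (V, E)) < card E"
    by fastforce
qed

lemma rc_line_line_lt_if_not_path:
  assumes conn: "connected_graph (V, E)" and "E \<noteq> {}" and not_path: "\<not> is_path_graph_len_ge3 (V, E)"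
  shows "rc (line_edges, line2_edges) < card E - card (pendent_2paths (V, E))"
proof -
  have "card (pendent_2paths (V, E)) \<le> card E - card middle_edges"
    by (rule card_pendent_2paths_le)
  moreover have "card middle_edges \<le> card E"
    using card_mono[OF finite_E middle_edges_subset] .
  ultimately have via_middle: ?thesis if "rc (line_edges, line2_edges) < card middle_edges"
    using that by linarith
  show ?thesis
  proof (cases "\<forall>v\<in>V. degree (V, E) v \<le> 2")
    case False
    then obtain v where "2 < degree (V, E) v"
      by (auto simp: not_le)
    then have "3 \<le> degree (V, E) v"
      by simp
    then obtain e1 e2 e3 where "adjacent_edges e1 e2" "adjacent_edges e1 e3" "adjacent_edges e2 e3"
      by (rule triangle_if_degree_ge_3)
    then show ?thesis
      using via_middle rc_line_line_lt_middle_edges_if_triangle[OF conn] by blast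
  next
    case True
    obtain xs where xs: "is_gpath (V, E) xs" "set xs = V" "2 \<le> length xs"
      and shape: "E = set (path_edges xs) \<or> 3 \<le> length xs \<and> {last xs, hd xs} \<notin> set (path_edges xs) \<and>
        E = insert {last xs, hd xs} (set (path_edges xs))"
      using max_degree_2_path_or_cycle[OF conn \<open>E \<noteq> {}\<close> True] by blast
    from shape show ?thesis
    proof
      assume E: "E = set (path_edges xs)"
      then have "\<not> 4 \<le> length xs"
        using not_path xs by (auto simp: is_path_graph_len_ge3_def)
      then have "card E \<le> 2"
        using E card_length[of "path_edges xs"] by simp
      then show ?thesis
        using small_graph[OF \<open>E \<noteq> {}\<close>] rc_line_line_le_middle_edges[OF conn] by simp
    next
      assume "3 \<le> length xs \<and> {last xs, hd xs} \<notin> set (path_edges xs) \<and>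
        E = insert {last xs, hd xs} (set (path_edges xs))"
      then show ?thesis
        using via_middle rc_line_line_lt_middle_edges_if_cycle[OF xs(1)] by blast
    qed
  qed
qed

lemma rc_line_line_le:
  assumes "connected_graph (V, E)"
  shows "rc (line_edges, line2_edges) \<le> card E - card (pendent_2paths (V, E))"
  using rc_line_line_le_middle_edges[OF assms] card_pendent_2paths_le card_mono[OF finite_E middle_edges_subset]
  by linarith

lemma rc_line_line_eq_iff_path:
  assumes conn: "connected_graph (V, E)" and "E \<noteq> {}"
  shows "rc (line_edges, line2_edges) = card E - card (pendent_2paths (V, E)) \<longleftrightarrow> is_path_graph_len_ge3 (V, E)"
proof
  assume "is_path_graph_len_ge3 (V, E)"
  then obtain xs where xs: "spanning_path xs" "4 \<le> length xs"
    by (auto simp: is_path_graph_len_ge3_iff)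
  have "card E = length xs - 1" "2 \<le> card (pendent_2paths (V, E))"
    "length xs - 3 \<le> rc (line_edges, line2_edges)"
    using card_E_spanning_path[OF xs(1)] two_le_card_pendent_2paths[OF xs] rc_ge_spanning_path[OF xs]
    by simp_all
  then show "rc (line_edges, line2_edges) = card E - card (pendent_2paths (V, E))"
    using rc_line_line_le[OF conn] by linarith
next
  assume "rc (line_edges, line2_edges) = card E - card (pendent_2paths (V, E))"
  then show "is_path_graph_len_ge3 (V, E)"
    using rc_line_line_lt_if_not_path[OF assms] by (metis less_irrefl)
qed

end

theorem theorem4p2:
  fixes G :: "'a graph"
  assumes "simple_graph G" and "connected_graph G" and "snd G \<noteq> {}"
  shows "int (rc (line_graph (line_graph G))) \<le> int (card (snd G)) - int (card (pendent_2paths G))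
     \<and> (int (rc (line_graph (line_graph G))) = int (card (snd G)) - int (card (pendent_2paths G))
          \<longleftrightarrow> is_path_graph_len_ge3 G)"
proof -
  obtain V E where G: "G = (V, E)"
    by fastforce
  interpret simple_graph_setting V E
    using assms(1) G by unfold_locales simp
  have conn: "connected_graph (V, E)" and "E \<noteq> {}"
    using assms(2,3) G by simp_all
  have "card (pendent_2paths (V, E)) \<le> card E"
    using card_pendent_2paths_le by linarith
  then have "int (card E - card (pendent_2paths (V, E))) = int (card E) - int (card (pendent_2paths (V, E)))"
    by (rule of_nat_diff)
  then show ?thesis
    using rc_line_line_le[OF conn] rc_line_line_eq_iff_path[OF conn \<open>E \<noteq> {}\<close>]
    unfolding G line_graph_line_graph by (metis of_nat_le_iff of_nat_eq_iff snd_conv)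
qed

end
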